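(* For a subset $\mathcal S$ of a $*$-algebra $\mathcal A$ the following are equivalent: (1) $\mathcal S=\mathcal I_{\mathrm{soft}}(\pi)$ for some finite-dimensional $*$-representation $\pi$ of $\mathcal A$; (2) $\mathcal S=\bigcup_{i=1}^k\widehat{I_i}$ for some $k\in\mathbb N$ and some real left ideals $I_1,\dots,I_k$ of $\mathcal A$ with $\dim(\mathcal A/I_i)<\infty$ for each $i$.
   Context: $\mathbb F\in\{\mathbb R,\mathbb C\}$. A $*$-algebra is a unital associative $\mathbb F$-algebra with involution. A left ideal $I$ is real if whenever $a_1,\dots,a_n\in\mathcal A$ and $\sum_j a_j^*a_j\in I+I^*$, every $a_j\in I$. A finite-dimensional $*$-representation $\pi$ is a unital $*$-homomorphism from $\mathcal A$ into the linear operators on a finite-dimensional inner product space $V_\pi$ over $\mathbb F$ (respecting adjoints). $\mathcal I_{\mathrm{soft}}(\pi)=\{a\in\mathcal A:\det\pi(a)=0\}$, i.e. the set of $a$ with $\pi(a)$ not invertible. For a left ideal $I$, $\widehat I=\{p\in\mathcal A:\text{there exists } q\in\mathcal A\setminus I \text{ with } pq\in I\}$. *)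

theory Defs
  imports Main "Jordan_Normal_Form.Determinant" "Jordan_Normal_Form.Conjugate"
begin

text \<open>The scalar involution is conjugate (identity on real, cnj on complex).\<close>
definition star_algebra ::
  "('k::conjugatable_field \<Rightarrow> 'a::ring_1 \<Rightarrow> 'a) \<Rightarrow> ('a \<Rightarrow> 'a) \<Rightarrow> bool" where
  "star_algebra sc st \<longleftrightarrow>
     vector_space sc \<and>
     (\<forall>c x y. sc c (x * y) = sc c x * y \<and> sc c (x * y) = x * sc c y) \<and>
     (\<forall>x y. st (x + y) = st x + st y) \<and>
     (\<forall>c x. st (sc c x) = sc (conjugate c) (st x)) \<and>
     (\<forall>x y. st (x * y) = st y * st x) \<and>
     (\<forall>x. st (st x) = x)"

definition adjoint_mat :: "'k::conjugatable_field mat \<Rightarrow> 'k mat" where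
  "adjoint_mat A = mat (dim_col A) (dim_row A) (\<lambda>(i, j). conjugate (A $$ (j, i)))"

text \<open>A finite-dimensional *-representation, realised on 'k^n with the standard
  inner product (every finite-dimensional inner product space is isometric to one of these).\<close>
definition star_rep ::
  "('k::conjugatable_field \<Rightarrow> 'a::ring_1 \<Rightarrow> 'a) \<Rightarrow> ('a \<Rightarrow> 'a) \<Rightarrow> nat \<Rightarrow> ('a \<Rightarrow> 'k mat) \<Rightarrow> bool" where
  "star_rep sc st n \<pi> \<longleftrightarrow>
     (\<forall>a. \<pi> a \<in> carrier_mat n n) \<and>
     \<pi> 1 = 1\<^sub>m n \<and>
     (\<forall>a b. \<pi> (a + b) = \<pi> a + \<pi> b) \<and>
     (\<forall>a b. \<pi> (a * b) = \<pi> a * \<pi> b) \<and>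
     (\<forall>c a. \<pi> (sc c a) = c \<cdot>\<^sub>m \<pi> a) \<and>
     (\<forall>a. \<pi> (st a) = adjoint_mat (\<pi> a))"

definition I_soft :: "('a \<Rightarrow> 'k::comm_ring_1 mat) \<Rightarrow> 'a set" where
  "I_soft \<pi> = {a. det (\<pi> a) = 0}"

definition left_ideal :: "'a::ring_1 set \<Rightarrow> bool" where
  "left_ideal I \<longleftrightarrow> 0 \<in> I \<and> (\<forall>x\<in>I. \<forall>y\<in>I. x + y \<in> I) \<and> (\<forall>a. \<forall>x\<in>I. a * x \<in> I)"

definition real_left_ideal :: "('a::ring_1 \<Rightarrow> 'a) \<Rightarrow> 'a set \<Rightarrow> bool" where
  "real_left_ideal st I \<longleftrightarrow> left_ideal I \<and>
     (\<forall>as :: 'a list. (\<Sum>a\<leftarrow>as. st a * a) \<in> {x + st y | x y. x \<in> I \<and> y \<in> I} \<longrightarrow> set as \<subseteq> I)"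

definition fin_codim :: "('k::field \<Rightarrow> 'a::ring_1 \<Rightarrow> 'a) \<Rightarrow> 'a set \<Rightarrow> bool" where
  "fin_codim sc I \<longleftrightarrow> (\<exists>B. finite B \<and> (\<forall>x. \<exists>y\<in>module.span sc B. x - y \<in> I))"

definition hat :: "'a::ring_1 set \<Rightarrow> 'a set" where
  "hat I = {p. \<exists>q. q \<notin> I \<and> p * q \<in> I}"

end

theory Submission
  imports Defs "Jordan_Normal_Form.Schur_Decomposition"
begin

text \<open>
  If \<open>\<pi>\<close> is a finite-dimensional \<open>*\<close>-representation with kernel \<open>K\<close>, then \<open>K\<close> is a real left
  ideal of finite codimension, because \<open>\<pi>(\<Sum> a\<^sub>j\<^sup>* a\<^sub>j) = \<Sum> \<pi>(a\<^sub>j)\<^sup>* \<pi>(a\<^sub>j)\<close> vanishes only if every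
  \<open>\<pi>(a\<^sub>j)\<close> does; and \<open>\<pi>(p)\<close> is singular iff left multiplication by \<open>p\<close> on the finite-dimensional
  space \<open>\<A>/K\<close> is, i.e. iff \<open>p \<in> hat K\<close>. So \<open>I_soft \<pi> = hat K\<close>.

  Conversely, direct sums of representations turn unions of hats into soft ideals, so it suffices
  to realise \<open>hat I\<close> for one real left ideal \<open>I\<close> of finite codimension. Its core
  \<open>J = {a. a \<A> \<subseteq> I}\<close> is a real two-sided ideal of finite codimension. The trace \<open>\<tau>\<close> of the left
  regular representation of \<open>\<A>/J\<close> is a faithful positive functional: realness of \<open>J\<close> forces
  every eigenvalue of left multiplication by \<open>x\<^sup>* x\<close> to be real and nonnegative, so
  \<open>\<tau>(x\<^sup>* x) \<ge> 0\<close>, and \<open>\<tau>(x\<^sup>* x) = 0\<close> makes \<open>x\<^sup>* x\<close> nilpotent modulo \<open>J\<close>, hence \<open>x \<in> J\<close>.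
  Thus \<open>\<langle>x, y\<rangle> = \<tau>(y\<^sup>* x)\<close> is an inner product on \<open>\<A>/J\<close>. For an orthonormal basis
  \<open>u\<^sub>1, \<dots>, u\<^sub>k\<close> of the orthogonal complement of \<open>I/J\<close>, the matrices
  \<open>\<pi>(a)\<^sub>i\<^sub>j = \<langle>a u\<^sub>j, u\<^sub>i\<rangle>\<close> form a \<open>*\<close>-representation, namely \<open>\<A>\<close> acting on \<open>\<A>/I\<close>,
  and \<open>\<pi>(p)\<close> is singular exactly when \<open>p \<in> hat I\<close>.
\<close>

section \<open>Scalar fields\<close>

class rclike = conjugatable_field + real_normed_field +
  assumes conjugate_scaleR_one: "conjugate (r *\<^sub>R 1) = r *\<^sub>R 1"
    and conjugate_mult_self_scaleR: "conjugate c * c = (norm c)\<^sup>2 *\<^sub>R 1"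
    and conjugate_fixed_scaleR: "conjugate c = c \<Longrightarrow> \<exists>r. c = r *\<^sub>R 1"

lemma conjugate_of_real [simp]: "conjugate (of_real r :: 'a::rclike) = of_real r"
  by (simp add: of_real_def conjugate_scaleR_one)

lemma conjugate_mult_self: "conjugate (c::'a::rclike) * c = of_real ((norm c)\<^sup>2)"
  by (simp add: of_real_def conjugate_mult_self_scaleR)

lemma conjugate_fixed_imp_real: "conjugate (c::'a::rclike) = c \<Longrightarrow> \<exists>r. c = of_real r"
  by (simp add: of_real_def conjugate_fixed_scaleR)

instance real :: rclike
  by standard (auto simp: power2_eq_square)

instance complex :: rclike
proof
  fix c :: complex
  have "(norm c)\<^sup>2 *\<^sub>R (1::complex) = c * cnj c"
    by (simp only: scaleR_conv_of_real mult_1_right complex_norm_square)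
  thus "conjugate c * c = (norm c)\<^sup>2 *\<^sub>R 1" by (simp add: mult.commute)
  show "conjugate c = c \<Longrightarrow> \<exists>r. c = r *\<^sub>R 1"
    by (intro exI[of _ "Re c"]) (simp add: complex_eq_iff)
qed simp

lemma conjugate_one [simp]: "conjugate (1::'k::rclike) = 1"
  using conjugate_of_real[of 1, where 'a='k] by simp

lemma conjugate_inverse: "conjugate (inverse (c::'k::rclike)) = inverse (conjugate c)"
proof (cases "c = 0")
  case False
  have "conjugate c * conjugate (inverse c) = 1"
    using False by (simp flip: conjugate_dist_mul)
  thus ?thesis by (rule inverse_unique[symmetric])
qed simp

lemma conjugate_divide: "conjugate ((a::'k::rclike) / b) = conjugate a / conjugate b"
  by (simp only: divide_inverse conjugate_dist_mul conjugate_inverse)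

lemma conjugate_numeral [simp]: "conjugate (numeral n :: 'k::rclike) = numeral n"
  using conjugate_of_real[of "numeral n", where 'a='k] by simp

section \<open>\<open>*\<close>-algebras\<close>

locale star_alg =
  fixes sc :: "'k::rclike \<Rightarrow> 'a::ring_1 \<Rightarrow> 'a" and st :: "'a \<Rightarrow> 'a"
  assumes star_algebra: "star_algebra sc st"
begin

sublocale v: vector_space sc
  using star_algebra unfolding star_algebra_def by blast

lemma sc_mult_left: "sc c x * y = sc c (x * y)"
  using star_algebra unfolding star_algebra_def by metis

lemma sc_mult_right: "x * sc c y = sc c (x * y)"
  using star_algebra unfolding star_algebra_def by metis

lemma st_add: "st (x + y) = st x + st y"
  using star_algebra unfolding star_algebra_def by blast

lemma st_sc: "st (sc c x) = sc (conjugate c) (st x)"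
  using star_algebra unfolding star_algebra_def by blast

lemma st_mult: "st (x * y) = st y * st x"
  using star_algebra unfolding star_algebra_def by blast

lemma st_st [simp]: "st (st x) = x"
  using star_algebra unfolding star_algebra_def by blast

lemma st_0 [simp]: "st 0 = 0"
  using st_add[of 0 0] by simp

lemma st_minus: "st (- x) = - st x"
  using st_add[of x "- x"] by (simp add: add.inverse_unique[symmetric])

lemma st_diff: "st (x - y) = st x - st y"
  by (simp only: diff_conv_add_uminus st_add st_minus)

lemma st_1 [simp]: "st 1 = 1"
  using st_mult[of "st 1" 1] by simp

lemma st_pow: "st (a ^ n) = st a ^ n"
  by (induct n) (simp_all add: st_mult power_commutes)

lemma sc_eq_sc_one_mult: "sc c x = sc c 1 * x"
  by (simp only: sc_mult_left mult_1_left)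

lemma st_sc_mult_sc: "st (sc c x) * sc c x = sc (conjugate c * c) (st x * x)"
  by (simp only: st_sc sc_mult_left sc_mult_right v.scale_scale mult.commute)

end

section \<open>Coordinates modulo a subspace of finite codimension\<close>

lemma sum_distinct_list_nth:
  assumes "distinct bs"
  shows "(\<Sum>b\<in>set bs. f b) = (\<Sum>i<length bs. f (bs ! i))"
proof -
  have "set bs = (!) bs ` {..<length bs}" by (auto simp: set_conv_nth)
  moreover have "inj_on ((!) bs) {..<length bs}" using assms by (simp add: inj_on_def nth_eq_iff_index_eq)
  ultimately show ?thesis by (simp add: sum.reindex)
qed

context star_alg begin

definition lin_comb :: "'k vec \<Rightarrow> 'a list \<Rightarrow> 'a" where
  "lin_comb w bs = (\<Sum>i<length bs. sc (w $ i) (bs ! i))"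

definition spans_mod :: "'a set \<Rightarrow> 'a set \<Rightarrow> bool" where
  "spans_mod K B \<longleftrightarrow> (\<forall>x. \<exists>y\<in>v.span B. x - y \<in> K)"

definition indep_mod :: "'a set \<Rightarrow> 'a set \<Rightarrow> bool" where
  "indep_mod K B \<longleftrightarrow> (\<forall>u. (\<Sum>b\<in>B. sc (u b) b) \<in> K \<longrightarrow> (\<forall>b\<in>B. u b = 0))"

lemma left_ideal_subspace: "left_ideal K \<Longrightarrow> v.subspace K"
  unfolding left_ideal_def v.subspace_def by (metis sc_eq_sc_one_mult)

lemma spans_mod_remove:
  assumes K: "v.subspace K" and fin: "finite B" and sp: "spans_mod K B"
    and u: "(\<Sum>b\<in>B. sc (u b) b) \<in> K" and b0: "b0 \<in> B" "u b0 \<noteq> 0"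
  shows "spans_mod K (B - {b0})"
  unfolding spans_mod_def
proof
  fix x
  from sp obtain y where y: "y \<in> v.span B" "x - y \<in> K" unfolding spans_mod_def by blast
  have "B = insert b0 (B - {b0})" using b0 by auto
  with y(1) have "y \<in> v.span (insert b0 (B - {b0}))" by simp
  then obtain k where k: "y - sc k b0 \<in> v.span (B - {b0})" using v.span_breakdown_eq by blast
  define z where "z = (\<Sum>b\<in>B - {b0}. sc (u b) b)"
  have zsp: "z \<in> v.span (B - {b0})" unfolding z_def
    by (intro v.span_sum v.span_scale v.span_base) auto
  have sumB: "(\<Sum>b\<in>B. sc (u b) b) = sc (u b0) b0 + z"
    unfolding z_def using fin b0 by (simp add: sum.remove)
  define y' where "y' = (y - sc k b0) - sc (k / u b0) z"
  have ysp: "y' \<in> v.span (B - {b0})" unfolding y'_def by (rule v.span_diff[OF k v.span_scale[OF zsp]])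
  have eq: "x - y' = (x - y) + sc (k / u b0) (sc (u b0) b0 + z)"
    unfolding y'_def using b0(2) by (simp add: algebra_simps v.scale_right_distrib)
  have inK: "(x - y) + sc (k / u b0) (sc (u b0) b0 + z) \<in> K"
    using y(2) u sumB K by (metis v.subspace_add v.subspace_scale)
  show "\<exists>y\<in>v.span (B - {b0}). x - y \<in> K"
  proof (rule bexI[OF _ ysp])
    show "x - y' \<in> K" by (subst eq) (rule inK)
  qed
qed

lemma spans_mod_indep_subset:
  assumes K: "v.subspace K"
  shows "finite B \<Longrightarrow> spans_mod K B \<Longrightarrow> \<exists>B'\<subseteq>B. spans_mod K B' \<and> indep_mod K B'"
proof (induction B rule: measure_induct_rule[of card])
  case (less B)
  show ?case
  proof (cases "indep_mod K B")
    case True with less show ?thesis by blast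
  next
    case False
    then obtain u b0 where u: "(\<Sum>b\<in>B. sc (u b) b) \<in> K" "b0 \<in> B" "u b0 \<noteq> 0"
      unfolding indep_mod_def by blast
    have sp: "spans_mod K (B - {b0})" by (rule spans_mod_remove[OF K less(2,3) u])
    have "card (B - {b0}) < card B" using less(2) u(2) by (rule card_Diff1_less)
    from less(1)[OF this _ sp] less(2) obtain B' where "B' \<subseteq> B - {b0}" "spans_mod K B'" "indep_mod K B'"
      by auto
    thus ?thesis by blast
  qed
qed

lemma lin_comb_eq_sum_set:
  assumes "distinct bs" "w \<in> carrier_vec (length bs)"
    "\<And>i. i < length bs \<Longrightarrow> w $ i = u (bs ! i)"
  shows "lin_comb w bs = (\<Sum>b\<in>set bs. sc (u b) b)"
  unfolding lin_comb_def using assms by (simp add: sum_distinct_list_nth)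

lemma lin_comb_add: "v1 \<in> carrier_vec (length bs) \<Longrightarrow> v2 \<in> carrier_vec (length bs) \<Longrightarrow>
   lin_comb (v1 + v2) bs = lin_comb v1 bs + lin_comb v2 bs"
  unfolding lin_comb_def by (simp add: v.scale_left_distrib sum.distrib)

lemma lin_comb_smult: "w \<in> carrier_vec (length bs) \<Longrightarrow> lin_comb (c \<cdot>\<^sub>v w) bs = sc c (lin_comb w bs)"
  unfolding lin_comb_def by (simp add: v.scale_sum_right)

lemma lin_comb_zero [simp]: "lin_comb (0\<^sub>v (length bs)) bs = 0"
  unfolding lin_comb_def by simp

lemma lin_comb_unit_vec: assumes j: "j < length bs" shows "lin_comb (unit_vec (length bs) j) bs = bs ! j"
proof -
  have "lin_comb (unit_vec (length bs) j) bs = (\<Sum>i<length bs. if i = j then bs ! i else 0)"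
    unfolding lin_comb_def by (rule sum.cong) (auto simp: unit_vec_def)
  also have "\<dots> = bs ! j" using j by (simp add: sum.delta)
  finally show ?thesis .
qed

lemma lin_comb_diff: "v1 \<in> carrier_vec (length bs) \<Longrightarrow> v2 \<in> carrier_vec (length bs) \<Longrightarrow>
   lin_comb (v1 - v2) bs = lin_comb v1 bs - lin_comb v2 bs"
  unfolding lin_comb_def by (simp add: v.scale_left_diff_distrib sum_subtractf)

end

lemma vec_diff_eq_0_iff:
  assumes "(v::'k::ab_group_add vec) \<in> carrier_vec n" and "w \<in> carrier_vec n"
  shows "v - w = 0\<^sub>v n \<longleftrightarrow> v = w"
  using assms by (auto simp: vec_eq_iff)

locale basis_mod = star_alg sc st for sc :: "'k::rclike \<Rightarrow> 'a::ring_1 \<Rightarrow> 'a" and st +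
  fixes K :: "'a set" and bs :: "'a list"
  assumes subspace_K: "v.subspace K"
    and spans: "\<forall>x. \<exists>w\<in>carrier_vec (length bs). x - lin_comb w bs \<in> K"
    and indep: "\<forall>w\<in>carrier_vec (length bs). lin_comb w bs \<in> K \<longrightarrow> w = 0\<^sub>v (length bs)"
begin

abbreviation "m \<equiv> length bs"

definition coord :: "'a \<Rightarrow> 'k vec" where
  "coord x = (SOME w. w \<in> carrier_vec m \<and> x - lin_comb w bs \<in> K)"

lemma coord_spec: "coord x \<in> carrier_vec m" "x - lin_comb (coord x) bs \<in> K"
proof -
  from spans obtain w where "w \<in> carrier_vec m \<and> x - lin_comb w bs \<in> K" by blast
  hence "coord x \<in> carrier_vec m \<and> x - lin_comb (coord x) bs \<in> K" unfolding coord_def by (rule someI)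
  thus "coord x \<in> carrier_vec m" "x - lin_comb (coord x) bs \<in> K" by auto
qed

lemma coord_carrier[simp]: "coord x \<in> carrier_vec m" by (rule coord_spec(1))
lemma dim_coord[simp]: "dim_vec (coord x) = m" using coord_spec(1) by auto

lemma coord_unique: assumes w: "w \<in> carrier_vec m" and x: "x - lin_comb w bs \<in> K" shows "coord x = w"
proof -
  have "(x - lin_comb w bs) - (x - lin_comb (coord x) bs) \<in> K" using x coord_spec(2) subspace_K v.subspace_diff by blast
  hence "lin_comb (coord x) bs - lin_comb w bs \<in> K" by (simp add: algebra_simps)
  hence "lin_comb (coord x - w) bs \<in> K" using w by (simp add: lin_comb_diff)
  hence "coord x - w = 0\<^sub>v m" using indep w by auto
  thus ?thesis using vec_diff_eq_0_iff[OF coord_carrier w] by blast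
qed

lemma coord_lin_comb: "w \<in> carrier_vec m \<Longrightarrow> coord (lin_comb w bs) = w"
  by (rule coord_unique) (auto intro: v.subspace_0[OF subspace_K])

lemma coord_add: "coord (x + y) = coord x + coord y"
proof (rule coord_unique)
  show "coord x + coord y \<in> carrier_vec m" by simp
  have "x + y - lin_comb (coord x + coord y) bs = (x - lin_comb (coord x) bs) + (y - lin_comb (coord y) bs)"
    by (simp add: lin_comb_add)
  thus "x + y - lin_comb (coord x + coord y) bs \<in> K" using coord_spec(2) subspace_K v.subspace_add by metis
qed

lemma coord_sc: "coord (sc c x) = c \<cdot>\<^sub>v coord x"
proof (rule coord_unique)
  show "c \<cdot>\<^sub>v coord x \<in> carrier_vec m" by simp
  have "sc c x - lin_comb (c \<cdot>\<^sub>v coord x) bs = sc c (x - lin_comb (coord x) bs)"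
    by (simp add: lin_comb_smult v.scale_right_diff_distrib)
  thus "sc c x - lin_comb (c \<cdot>\<^sub>v coord x) bs \<in> K" using coord_spec(2) subspace_K v.subspace_scale by metis
qed

lemma coord_eq_0_iff: "coord x = 0\<^sub>v m \<longleftrightarrow> x \<in> K"
proof
  assume "coord x = 0\<^sub>v m" thus "x \<in> K" using coord_spec(2)[of x] by simp
next
  assume "x \<in> K" thus "coord x = 0\<^sub>v m" by (intro coord_unique) auto
qed

lemma coord_diff: "coord (x - y) = coord x - coord y"
proof (rule coord_unique)
  show "coord x - coord y \<in> carrier_vec m" by simp
  have "x - y - lin_comb (coord x - coord y) bs = (x - lin_comb (coord x) bs) - (y - lin_comb (coord y) bs)"
    by (simp add: lin_comb_diff)
  thus "x - y - lin_comb (coord x - coord y) bs \<in> K" using coord_spec(2) subspace_K v.subspace_diff by metis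
qed

lemma coord_eq_iff: "coord x = coord y \<longleftrightarrow> x - y \<in> K"
  using coord_diff[of x y] coord_eq_0_iff[of "x - y"] vec_diff_eq_0_iff[OF coord_carrier coord_carrier, of x y]
  by simp

end

context star_alg begin

lemma spans_mod_imp_lin_comb_spans:
  assumes "distinct bs" and "spans_mod K (set bs)"
  shows "\<exists>w\<in>carrier_vec (length bs). x - lin_comb w bs \<in> K"
proof -
  obtain y where y: "y \<in> v.span (set bs)" "x - y \<in> K" using assms(2) unfolding spans_mod_def by blast
  from y(1) v.span_finite[of "set bs"] obtain u where "y = (\<Sum>b\<in>set bs. sc (u b) b)" by auto
  moreover have "lin_comb (vec (length bs) (\<lambda>i. u (bs ! i))) bs = (\<Sum>b\<in>set bs. sc (u b) b)"
    by (rule lin_comb_eq_sum_set) (use assms(1) in auto)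
  ultimately show ?thesis using y(2) by (intro bexI[of _ "vec (length bs) (\<lambda>i. u (bs ! i))"]) auto
qed

lemma indep_mod_imp_lin_comb_indep:
  assumes "distinct bs" and "indep_mod K (set bs)"
    and w: "w \<in> carrier_vec (length bs)" and "lin_comb w bs \<in> K"
  shows "w = 0\<^sub>v (length bs)"
proof -
  define u where "u b = w $ (THE i. i < length bs \<and> bs ! i = b)" for b
  have ui: "u (bs ! i) = w $ i" if "i < length bs" for i
  proof -
    have "(THE j. j < length bs \<and> bs ! j = bs ! i) = i"
      using that assms(1) by (auto simp: nth_eq_iff_index_eq)
    thus ?thesis unfolding u_def by simp
  qed
  have "lin_comb w bs = (\<Sum>b\<in>set bs. sc (u b) b)"
    by (rule lin_comb_eq_sum_set) (use assms(1) w ui in auto)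
  hence "\<forall>b\<in>set bs. u b = 0" using assms(2,4) unfolding indep_mod_def by auto
  thus ?thesis using w ui by (intro eq_vecI) auto
qed

lemma exists_basis_mod:
  assumes K: "v.subspace K" and fin: "finite B" and sp: "spans_mod K B"
  shows "\<exists>bs. basis_mod sc st K bs"
proof -
  obtain B' where B': "B' \<subseteq> B" "spans_mod K B'" "indep_mod K B'"
    using spans_mod_indep_subset[OF K fin sp] by blast
  obtain bs where bs: "set bs = B'" "distinct bs"
    using finite_distinct_list[OF finite_subset[OF B'(1) fin]] by blast
  show ?thesis
    using spans_mod_imp_lin_comb_spans[OF bs(2)] indep_mod_imp_lin_comb_indep[OF bs(2)] B' bs(1) K
      star_alg_axioms
    unfolding basis_mod_def basis_mod_axioms_def by blast
qed

definition quotient_basis :: "'a set \<Rightarrow> 'a list" where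
  "quotient_basis K = (SOME bs. basis_mod sc st K bs)"

lemma basis_mod_quotient_basis:
  assumes "v.subspace K" and "fin_codim sc K"
  shows "basis_mod sc st K (quotient_basis K)"
  using assms exists_basis_mod unfolding fin_codim_def spans_mod_def quotient_basis_def
  by (metis someI_ex)

end

locale left_ideal_basis = basis_mod sc st K bs for sc :: "'k::rclike \<Rightarrow> 'a::ring_1 \<Rightarrow> 'a" and st K bs +
  assumes left_ideal_K: "left_ideal K"
begin

definition reg :: "'a \<Rightarrow> 'k mat" where
  "reg a = mat m m (\<lambda>(i,j). coord (a * bs ! j) $ i)"

lemma reg_carrier[simp]: "reg a \<in> carrier_mat m m" unfolding reg_def by simp
lemma dim_reg[simp]: "dim_row (reg a) = m" "dim_col (reg a) = m" unfolding reg_def by simp_all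

lemma mult_in_K: "x \<in> K \<Longrightarrow> a * x \<in> K" using left_ideal_K unfolding left_ideal_def by blast

lemma mult_lin_comb: "a * lin_comb w bs = (\<Sum>j<m. sc (w $ j) (a * bs ! j))"
  unfolding lin_comb_def by (simp add: sum_distrib_left sc_mult_right)

lemma lin_comb_reg_mult: assumes w: "w \<in> carrier_vec m"
  shows "lin_comb (reg a *\<^sub>v w) bs = (\<Sum>j<m. sc (w $ j) (lin_comb (coord (a * bs ! j)) bs))"
proof -
  have "lin_comb (reg a *\<^sub>v w) bs = (\<Sum>i<m. sc (\<Sum>j<m. coord (a * bs ! j) $ i * w $ j) (bs ! i))"
    unfolding lin_comb_def using w by (simp add: reg_def scalar_prod_def atLeast0LessThan mult.commute)
  also have "\<dots> = (\<Sum>i<m. \<Sum>j<m. sc (w $ j) (sc (coord (a * bs ! j) $ i) (bs ! i)))"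
    by (simp add: v.scale_sum_left mult.commute)
  also have "\<dots> = (\<Sum>j<m. \<Sum>i<m. sc (w $ j) (sc (coord (a * bs ! j) $ i) (bs ! i)))"
    by (rule sum.swap)
  also have "\<dots> = (\<Sum>j<m. sc (w $ j) (lin_comb (coord (a * bs ! j)) bs))"
    unfolding lin_comb_def by (simp add: v.scale_sum_right)
  finally show ?thesis .
qed

lemma coord_mult_lin_comb: assumes w: "w \<in> carrier_vec m"
  shows "coord (a * lin_comb w bs) = reg a *\<^sub>v w"
proof (rule coord_unique)
  show "reg a *\<^sub>v w \<in> carrier_vec m" by (rule mult_mat_vec_carrier[OF reg_carrier w])
  have "a * lin_comb w bs - lin_comb (reg a *\<^sub>v w) bs = (\<Sum>j<m. sc (w $ j) (a * bs ! j - lin_comb (coord (a * bs ! j)) bs))"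
    unfolding mult_lin_comb lin_comb_reg_mult[OF w] by (simp add: sum_subtractf v.scale_right_diff_distrib)
  also have "\<dots> \<in> K" using coord_spec(2) by (intro v.subspace_sum[OF subspace_K] v.subspace_scale[OF subspace_K]) auto
  finally show "a * lin_comb w bs - lin_comb (reg a *\<^sub>v w) bs \<in> K" .
qed

lemma coord_mult: "coord (a * y) = reg a *\<^sub>v coord y"
proof -
  have "a * y - a * lin_comb (coord y) bs \<in> K" using mult_in_K[OF coord_spec(2)[of y]] by (simp add: right_diff_distrib)
  hence "coord (a * y) = coord (a * lin_comb (coord y) bs)" using coord_eq_iff by blast
  thus ?thesis using coord_mult_lin_comb by simp
qed

lemma col_reg: "j < m \<Longrightarrow> col (reg a) j = coord (a * bs ! j)"
  unfolding reg_def by (intro eq_vecI) auto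

lemma reg_mult: "reg (a * b) = reg a * reg b"
proof (rule eq_matI)
  fix i j assume ij: "i < dim_row (reg a * reg b)" "j < dim_col (reg a * reg b)"
  hence ij': "i < m" "j < m" by auto
  have "(reg a * reg b) $$ (i, j) = (reg a *\<^sub>v col (reg b) j) $ i"
    using ij' by simp
  also have "\<dots> = coord (a * (b * bs ! j)) $ i" using ij' by (simp add: col_reg coord_mult)
  also have "\<dots> = reg (a * b) $$ (i,j)" using ij' by (simp add: reg_def mult.assoc)
  finally show "reg (a * b) $$ (i, j) = (reg a * reg b) $$ (i, j)" by simp
qed auto

lemma coord_basis_elem: "j < m \<Longrightarrow> coord (bs ! j) = unit_vec m j"
  using coord_lin_comb[of "unit_vec m j"] lin_comb_unit_vec[of j bs] by simp

lemma reg_one: "reg 1 = 1\<^sub>m m"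
  by (rule eq_matI) (auto simp: reg_def coord_basis_elem unit_vec_def)

lemma reg_add: "reg (a + b) = reg a + reg b"
  by (rule eq_matI) (auto simp: reg_def distrib_right coord_add)

lemma reg_sc: "reg (sc c a) = c \<cdot>\<^sub>m reg a"
  by (rule eq_matI) (auto simp: reg_def sc_mult_left coord_sc)

lemma reg_pow: "reg (a ^ k) = reg a ^\<^sub>m k"
proof (induct k)
  case 0 show ?case by (simp add: reg_one)
next
  case (Suc k)
  have "reg (a ^ Suc k) = reg (a ^ k * a)" by (simp only: power_Suc2)
  also have "\<dots> = reg a ^\<^sub>m k * reg a" by (simp only: reg_mult Suc)
  finally show ?case by simp
qed

lemma reg_eq_0_imp_mem: assumes "reg a = 0\<^sub>m m m" shows "a \<in> K"
proof -
  have "coord (a * 1) = 0\<^sub>v m" unfolding coord_mult assms by (rule eq_vecI) auto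
  thus ?thesis using coord_eq_0_iff by simp
qed

lemma hat_eq_singular_reg: "hat K = {p. det (reg p) = 0}"
  unfolding set_eq_iff
proof (intro allI iffI)
  fix p assume "p \<in> hat K"
  then obtain q where q: "q \<notin> K" "p * q \<in> K" unfolding hat_def by blast
  have "coord q \<noteq> 0\<^sub>v m" using q coord_eq_0_iff by blast
  moreover have "reg p *\<^sub>v coord q = 0\<^sub>v m" using q coord_mult coord_eq_0_iff by metis
  ultimately show "p \<in> {p. det (reg p) = 0}" using det_0_iff_vec_prod_zero[OF reg_carrier] by force
next
  fix p assume "p \<in> {p. det (reg p) = 0}"
  hence "det (reg p) = 0" by simp
  then obtain w where w: "w \<in> carrier_vec m" "w \<noteq> 0\<^sub>v m" "reg p *\<^sub>v w = 0\<^sub>v m"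
    using det_0_iff_vec_prod_zero[OF reg_carrier] by blast
  have "lin_comb w bs \<notin> K" using w coord_lin_comb coord_eq_0_iff by metis
  moreover have "p * lin_comb w bs \<in> K" using w coord_mult_lin_comb coord_eq_0_iff by metis
  ultimately show "p \<in> hat K" unfolding hat_def by blast
qed

lemma right_inverse_mod_of_det_reg:
  assumes "det (reg p) \<noteq> 0"
  shows "\<exists>c. p * c - 1 \<in> K"
proof -
  obtain B where B: "B \<in> carrier_mat m m" "reg p * B = 1\<^sub>m m"
    using det_non_zero_imp_unit[OF reg_carrier assms] unfolding Units_def ring_mat_def by auto
  define w where "w = B *\<^sub>v coord 1"
  have w: "w \<in> carrier_vec m" unfolding w_def using B(1) by simp
  have "coord (p * lin_comb w bs) = reg p *\<^sub>v w" by (rule coord_mult_lin_comb[OF w])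
  also have "\<dots> = (reg p * B) *\<^sub>v coord 1"
    unfolding w_def using assoc_mult_mat_vec[OF reg_carrier B(1) coord_carrier] by simp
  also have "\<dots> = coord 1" using B(2) by simp
  finally show ?thesis using coord_eq_iff by blast
qed

end

lemma (in star_alg) left_ideal_basis_quotient_basis:
  assumes "left_ideal K" and "fin_codim sc K"
  shows "left_ideal_basis sc st K (quotient_basis K)"
  using assms basis_mod_quotient_basis[OF left_ideal_subspace]
  unfolding left_ideal_basis_def left_ideal_basis_axioms_def by blast

context star_alg begin

definition linear_form :: "('a \<Rightarrow> 'k) \<Rightarrow> bool" where
  "linear_form f \<longleftrightarrow> (\<forall>x y. f (x + y) = f x + f y) \<and> (\<forall>c x. f (sc c x) = c * f x)"

lemma linear_form_add: "linear_form f \<Longrightarrow> f (x + y) = f x + f y"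
  unfolding linear_form_def by blast

lemma linear_form_sc: "linear_form f \<Longrightarrow> f (sc c x) = c * f x"
  unfolding linear_form_def by blast

lemma linear_form_diff: "linear_form f \<Longrightarrow> f (x - y) = f x - f y"
  using linear_form_add[of f "x - y" y] by simp

lemma exists_finite_span_mod_forms:
  assumes S: "v.subspace S" and "finite F" and "\<forall>f\<in>F. linear_form f"
  shows "\<exists>B. finite B \<and> B \<subseteq> S \<and> (\<forall>x\<in>S. \<exists>y\<in>v.span B. \<forall>f\<in>F. f x = f y)"
  using assms(2,3)
proof (induct F rule: finite_induct)
  case empty
  show ?case by (rule exI[of _ "{}"]) (auto intro: v.span_zero)
next
  case (insert f F)
  then obtain B where B: "finite B" "B \<subseteq> S"
    and agree: "\<forall>x\<in>S. \<exists>y\<in>v.span B. \<forall>g\<in>F. g x = g y" by auto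
  have lin_f: "linear_form f" and lin_F: "\<forall>g\<in>F. linear_form g" using insert.prems by auto
  show ?case
  proof (cases "\<exists>z\<in>S. (\<forall>g\<in>F. g z = 0) \<and> f z \<noteq> 0")
    case True
    then obtain z where z: "z \<in> S" "\<forall>g\<in>F. g z = 0" "f z \<noteq> 0" by blast
    have "\<exists>y'\<in>v.span (insert z B). \<forall>g\<in>insert f F. g x = g y'" if "x \<in> S" for x
    proof -
      obtain y where y: "y \<in> v.span B" "\<forall>g\<in>F. g x = g y" using agree \<open>x \<in> S\<close> by blast
      define y' where "y' = y + sc ((f x - f y) / f z) z"
      have "y' \<in> v.span (insert z B)" unfolding y'_def
        by (intro v.span_add v.span_scale) (auto intro: v.span_base v.span_mono[THEN subsetD, OF _ y(1)])
      moreover have "\<forall>g\<in>insert f F. g x = g y'"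
        using y(2) z lin_f lin_F unfolding y'_def by (auto simp: linear_form_add linear_form_sc)
      ultimately show ?thesis by blast
    qed
    thus ?thesis using B z by (intro exI[of _ "insert z B"]) auto
  next
    case False
    have "\<exists>y\<in>v.span B. \<forall>g\<in>insert f F. g x = g y" if "x \<in> S" for x
    proof -
      obtain y where y: "y \<in> v.span B" "\<forall>g\<in>F. g x = g y" using agree \<open>x \<in> S\<close> by blast
      have "v.span B \<subseteq> S" using B(2) S by (rule v.span_minimal)
      hence "x - y \<in> S" using \<open>x \<in> S\<close> y(1) S v.subspace_diff by blast
      moreover have "\<forall>g\<in>F. g (x - y) = 0" using y(2) lin_F by (simp add: linear_form_diff)
      ultimately have "f x = f y" using False lin_f by (force simp: linear_form_diff)
      thus ?thesis using y by auto
    qed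
    thus ?thesis using B by blast
  qed
qed

lemma finite_span_mod_of_forms:
  assumes "v.subspace S" and "finite F" and "\<forall>f\<in>F. linear_form f"
    and "\<And>x y. \<forall>f\<in>F. f x = f y \<Longrightarrow> x - y \<in> K"
  shows "\<exists>B. finite B \<and> B \<subseteq> S \<and> (\<forall>x\<in>S. \<exists>y\<in>v.span B. x - y \<in> K)"
  using exists_finite_span_mod_forms[OF assms(1-3)] assms(4) by metis

lemma fin_codim_of_forms:
  assumes "finite F" and "\<forall>f\<in>F. linear_form f" and "\<And>x y. \<forall>f\<in>F. f x = f y \<Longrightarrow> x - y \<in> K"
  shows "fin_codim sc K"
  using finite_span_mod_of_forms[OF v.subspace_UNIV assms] unfolding fin_codim_def by blast

end

context basis_mod begin

lemma linear_form_coord_mult: "i < m \<Longrightarrow> linear_form (\<lambda>a. coord (a * b) $ i)"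
  unfolding linear_form_def by (simp add: distrib_right coord_add sc_mult_left coord_sc)

end

section \<open>Traces of matrices with nonnegative spectrum\<close>

definition mat_trace :: "'a::comm_monoid_add mat \<Rightarrow> 'a" where
  "mat_trace A = (\<Sum>i<dim_row A. A $$ (i,i))"

definition nonneg_real :: "'k::real_algebra_1 \<Rightarrow> bool" where
  "nonneg_real z \<longleftrightarrow> (\<exists>r\<ge>0. z = of_real r)"

lemma mat_trace_mult_comm:
  fixes A :: "'a::comm_semiring_0 mat"
  assumes A: "A \<in> carrier_mat n m" and B: "B \<in> carrier_mat m n"
  shows "mat_trace (A * B) = mat_trace (B * A)"
proof -
  have "mat_trace (A * B) = (\<Sum>i<n. \<Sum>k<m. A $$ (i,k) * B $$ (k,i))"
    unfolding mat_trace_def using A B by (simp add: scalar_prod_def atLeast0LessThan)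
  also have "\<dots> = (\<Sum>k<m. \<Sum>i<n. B $$ (k,i) * A $$ (i,k))"
    by (subst sum.swap) (simp add: mult.commute)
  also have "\<dots> = mat_trace (B * A)"
    unfolding mat_trace_def using A B by (simp add: scalar_prod_def atLeast0LessThan)
  finally show ?thesis .
qed

lemma mat_trace_similar:
  fixes A :: "'a::comm_semiring_1 mat"
  assumes A: "A \<in> carrier_mat n n" and s: "similar_mat_wit A B P Q"
  shows "mat_trace A = mat_trace B"
proof -
  note d = similar_mat_witD2[OF A s]
  have "mat_trace A = mat_trace (P * (B * Q))" using d by (simp add: assoc_mult_mat[of P n n B n Q n])
  also have "\<dots> = mat_trace ((B * Q) * P)" using d by (intro mat_trace_mult_comm[of _ n n]) auto
  also have "\<dots> = mat_trace (B * (Q * P))" using d by (simp add: assoc_mult_mat[of B n n Q n P n])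
  also have "\<dots> = mat_trace B" using d by simp
  finally show ?thesis .
qed

lemma strictly_upper_pow_zero:
  fixes B :: "'a::comm_semiring_1 mat"
  assumes B: "B \<in> carrier_mat n n" and z: "\<And>i j. i < n \<Longrightarrow> j < n \<Longrightarrow> j \<le> i \<Longrightarrow> B $$ (i,j) = 0"
  shows "i < n \<Longrightarrow> j < n \<Longrightarrow> j < i + k \<Longrightarrow> (B ^\<^sub>m k) $$ (i,j) = 0"
proof (induct k arbitrary: i j)
  case 0 thus ?case using B by simp
next
  case (Suc k)
  have "(B ^\<^sub>m Suc k) $$ (i,j) = (\<Sum>l<n. (B ^\<^sub>m k) $$ (i,l) * B $$ (l,j))"
    using Suc(2,3) B by (simp add: scalar_prod_def atLeast0LessThan)
  also have "\<dots> = 0"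
  proof (rule sum.neutral, rule ballI)
    fix l assume l: "l \<in> {..<n}"
    show "(B ^\<^sub>m k) $$ (i,l) * B $$ (l,j) = 0"
    proof (cases "l < i + k")
      case True thus ?thesis using Suc(1)[of i l] Suc(2) l by simp
    next
      case False hence "j \<le> l" using Suc(4) by simp
      thus ?thesis using z[of l j] l Suc(3) by simp
    qed
  qed
  finally show ?case .
qed

lemma strictly_upper_nilpotent:
  fixes B :: "'a::comm_semiring_1 mat"
  assumes B: "B \<in> carrier_mat n n" and z: "\<And>i j. i < n \<Longrightarrow> j < n \<Longrightarrow> j \<le> i \<Longrightarrow> B $$ (i,j) = 0"
  shows "B ^\<^sub>m n = 0\<^sub>m n n"
  by (rule eq_matI) (use B strictly_upper_pow_zero[OF B z] in auto)

lemma upper_triangular_zero_diag_nilpotent: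
  fixes B :: "'a::comm_semiring_1 mat"
  assumes B: "B \<in> carrier_mat n n" and "upper_triangular B" and "\<And>i. i < n \<Longrightarrow> B $$ (i,i) = 0"
  shows "B ^\<^sub>m n = 0\<^sub>m n n"
proof (rule strictly_upper_nilpotent[OF B])
  fix i j assume "i < n" "j < n" "j \<le> i"
  thus "B $$ (i,j) = 0" using assms by (cases "j = i") (auto intro: upper_triangularD)
qed

lemma nonneg_real_sum_list: "\<forall>e\<in>set es. nonneg_real e \<Longrightarrow> nonneg_real (sum_list (es :: 'k::real_algebra_1 list))"
proof (induct es)
  case Nil show ?case unfolding nonneg_real_def by (rule exI[of _ 0]) simp
next
  case (Cons e es)
  then obtain r s where "r \<ge> 0" "e = of_real r" "s \<ge> 0" "sum_list es = of_real s"
    unfolding nonneg_real_def by auto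
  thus ?case unfolding nonneg_real_def by (intro exI[of _ "r + s"]) simp
qed

lemma nonneg_real_sum_list_eq_0:
  "\<forall>e\<in>set es. nonneg_real e \<Longrightarrow> sum_list (es :: 'k::real_algebra_1 list) = 0 \<Longrightarrow> \<forall>e\<in>set es. e = 0"
proof (induct es)
  case (Cons e es)
  obtain r where r: "r \<ge> 0" "e = of_real r" using Cons(2) unfolding nonneg_real_def by auto
  obtain s where s: "s \<ge> 0" "sum_list es = of_real s"
    using nonneg_real_sum_list[of es] Cons(2) unfolding nonneg_real_def by auto
  have "of_real (r + s) = (0::'k)" using Cons(3) r s by simp
  hence "r + s = 0" by (simp only: of_real_eq_0_iff)
  hence "r = 0" "s = 0" using r s by auto
  thus ?case using Cons r s by simp
qed simp

lemma nonneg_spectrum_trace_complex: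
  fixes A :: "complex mat"
  assumes A: "A \<in> carrier_mat n n" and ev: "\<And>e. eigenvalue A e \<Longrightarrow> nonneg_real e"
  shows "nonneg_real (mat_trace A) \<and> (mat_trace A = 0 \<longrightarrow> A ^\<^sub>m n = 0\<^sub>m n n)"
proof -
  obtain es where cp: "char_poly A = (\<Prod>a\<leftarrow>es. [:- a, 1:])" and len: "length es = n"
    using char_poly_factorized[OF A] by blast
  obtain B P Q where sd: "schur_decomposition A es = (B,P,Q)" by (cases "schur_decomposition A es") auto
  from schur_decomposition[OF A cp sd]
  have s: "similar_mat_wit A B P Q" and ut: "upper_triangular B" and dg: "diag_mat B = es" by auto
  note d = similar_mat_witD2[OF A s]
  have "mat_trace A = mat_trace B" by (rule mat_trace_similar[OF A s])
  also have "\<dots> = sum_list (diag_mat B)" unfolding mat_trace_def diag_mat_def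
    using interv_sum_list_conv_sum_set_nat[of "\<lambda>i. B $$ (i,i)" 0 "dim_row B"]
    by (simp add: atLeast0LessThan)
  finally have tr: "mat_trace A = sum_list es" using dg by simp
  have es: "\<forall>e\<in>set es. nonneg_real e"
  proof
    fix e assume "e \<in> set es"
    hence "poly (char_poly A) e = 0" unfolding cp poly_prod_list by (auto simp: prod_list_zero_iff)
    thus "nonneg_real e" using ev eigenvalue_root_char_poly[OF A] by blast
  qed
  have "A ^\<^sub>m n = 0\<^sub>m n n" if "mat_trace A = 0"
  proof -
    have "\<forall>e\<in>set es. e = 0" using nonneg_real_sum_list_eq_0[OF es] tr that by simp
    hence "B $$ (i,i) = 0" if "i < n" for i using that d dg len by (auto simp: diag_mat_def)
    hence "B ^\<^sub>m n = 0\<^sub>m n n" by (rule upper_triangular_zero_diag_nilpotent[OF d(5) ut])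
    moreover have "A ^\<^sub>m n = P * B ^\<^sub>m n * Q" by (rule similar_mat_wit_pow_id[OF s])
    ultimately show ?thesis using d by simp
  qed
  thus ?thesis using tr nonneg_real_sum_list[OF es] by simp
qed

text \<open>Over \<open>\<real>\<close>, an eigenvalue \<open>a + b\<i>\<close> of the complexification shows up as an invariant plane
  on which the matrix acts by \<open>(u, w) \<mapsto> (a u - b w, b u + a w)\<close>.\<close>

lemma real_parts_complex_eigenvector:
  fixes M :: "real mat"
  assumes M: "M \<in> carrier_mat n n" and v: "v \<in> carrier_vec n" "v \<noteq> 0\<^sub>v n"
    and ev: "map_mat complex_of_real M *\<^sub>v v = e \<cdot>\<^sub>v v"
  defines "u \<equiv> map_vec Re v" and "w \<equiv> map_vec Im v"
  shows "u \<noteq> 0\<^sub>v n \<or> w \<noteq> 0\<^sub>v n"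
    and "M *\<^sub>v u = Re e \<cdot>\<^sub>v u - Im e \<cdot>\<^sub>v w"
    and "M *\<^sub>v w = Im e \<cdot>\<^sub>v u + Re e \<cdot>\<^sub>v w"
proof -
  have row: "(\<Sum>j<n. complex_of_real (M $$ (i,j)) * v $ j) = e * v $ i" if "i < n" for i
    using arg_cong[OF ev, of "\<lambda>x. x $ i"] that M v(1) by (simp add: scalar_prod_def atLeast0LessThan)
  show "u \<noteq> 0\<^sub>v n \<or> w \<noteq> 0\<^sub>v n"
  proof (rule ccontr)
    assume "\<not> ?thesis"
    hence "Re (v $ i) = 0 \<and> Im (v $ i) = 0" if "i < n" for i
      using that v(1) unfolding u_def w_def by (metis index_map_vec index_zero_vec carrier_vecD)
    hence "v = 0\<^sub>v n" using v(1) by (intro eq_vecI) (auto simp: complex_eq_iff)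
    thus False using v(2) by simp
  qed
  show "M *\<^sub>v u = Re e \<cdot>\<^sub>v u - Im e \<cdot>\<^sub>v w"
  proof (rule eq_vecI)
    fix i assume "i < dim_vec (Re e \<cdot>\<^sub>v u - Im e \<cdot>\<^sub>v w)"
    hence i: "i < n" using v(1) unfolding u_def w_def by simp
    have "(M *\<^sub>v u) $ i = Re (\<Sum>j<n. complex_of_real (M $$ (i,j)) * v $ j)"
      using i M v(1) unfolding u_def by (simp add: scalar_prod_def atLeast0LessThan Re_sum)
    thus "(M *\<^sub>v u) $ i = (Re e \<cdot>\<^sub>v u - Im e \<cdot>\<^sub>v w) $ i"
      using i v(1) row[OF i] unfolding u_def w_def by simp
  qed (use M v(1) in \<open>simp add: u_def w_def\<close>)
  show "M *\<^sub>v w = Im e \<cdot>\<^sub>v u + Re e \<cdot>\<^sub>v w"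
  proof (rule eq_vecI)
    fix i assume "i < dim_vec (Im e \<cdot>\<^sub>v u + Re e \<cdot>\<^sub>v w)"
    hence i: "i < n" using v(1) unfolding u_def w_def by simp
    have "(M *\<^sub>v w) $ i = Im (\<Sum>j<n. complex_of_real (M $$ (i,j)) * v $ j)"
      using i M v(1) unfolding w_def by (simp add: scalar_prod_def atLeast0LessThan Im_sum)
    thus "(M *\<^sub>v w) $ i = (Im e \<cdot>\<^sub>v u + Re e \<cdot>\<^sub>v w) $ i"
      using i v(1) row[OF i] unfolding u_def w_def by simp
  qed (use M v(1) in \<open>simp add: u_def w_def\<close>)
qed

lemma nonneg_spectrum_trace_real:
  fixes M :: "real mat"
  assumes M: "M \<in> carrier_mat n n"
    and plane: "\<And>u w a b. u \<in> carrier_vec n \<Longrightarrow> w \<in> carrier_vec n \<Longrightarrow> u \<noteq> 0\<^sub>v n \<or> w \<noteq> 0\<^sub>v n \<Longrightarrow>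
       M *\<^sub>v u = a \<cdot>\<^sub>v u - b \<cdot>\<^sub>v w \<Longrightarrow> M *\<^sub>v w = b \<cdot>\<^sub>v u + a \<cdot>\<^sub>v w \<Longrightarrow> b = 0 \<and> a \<ge> 0"
  shows "nonneg_real (mat_trace M) \<and> (mat_trace M = 0 \<longrightarrow> M ^\<^sub>m n = 0\<^sub>m n n)"
proof -
  define Mc where "Mc = map_mat complex_of_real M"
  have Mc: "Mc \<in> carrier_mat n n" using M unfolding Mc_def by simp
  have "nonneg_real e" if "eigenvalue Mc e" for e
  proof -
    from that obtain v where v: "v \<in> carrier_vec n" "v \<noteq> 0\<^sub>v n" "Mc *\<^sub>v v = e \<cdot>\<^sub>v v"
      unfolding eigenvalue_def eigenvector_def using Mc by auto
    have "Im e = 0 \<and> Re e \<ge> 0"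
      using real_parts_complex_eigenvector[OF M v(1,2) v(3)[unfolded Mc_def]] v(1)
      by (intro plane) auto
    thus "nonneg_real e" unfolding nonneg_real_def by (intro exI[of _ "Re e"]) (simp add: complex_eq_iff)
  qed
  from nonneg_spectrum_trace_complex[OF Mc this]
  have Mc_tr: "nonneg_real (mat_trace Mc)" "mat_trace Mc = 0 \<Longrightarrow> Mc ^\<^sub>m n = 0\<^sub>m n n" by auto
  have tr: "mat_trace Mc = complex_of_real (mat_trace M)" unfolding mat_trace_def Mc_def using M by simp
  have "M ^\<^sub>m n = 0\<^sub>m n n" if "mat_trace M = 0"
  proof (rule of_real_hom.mat_hom_inj)
    have "map_mat complex_of_real (M ^\<^sub>m n) = Mc ^\<^sub>m n"
      unfolding Mc_def by (rule of_real_hom.mat_hom_pow[OF M])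
    also have "\<dots> = 0\<^sub>m n n" using Mc_tr(2) tr that by simp
    also have "\<dots> = map_mat complex_of_real (0\<^sub>m n n)" by (rule eq_matI) auto
    finally show "map_mat complex_of_real (M ^\<^sub>m n) = map_mat complex_of_real (0\<^sub>m n n)" .
  qed
  thus ?thesis using Mc_tr(1) unfolding tr nonneg_real_def by auto
qed

text \<open>The hypotheses
  speak only about eigenvectors over \<open>'k\<close> and, for the real case, invariant planes, because these
  are what can be pulled back into the algebra.\<close>

definition nonneg_spectrum_trace_property :: "'k::rclike itself \<Rightarrow> bool" where
  "nonneg_spectrum_trace_property T \<longleftrightarrow> (\<forall>n (M::'k mat). M \<in> carrier_mat n n \<longrightarrow>
     (\<forall>v e. v \<in> carrier_vec n \<longrightarrow> v \<noteq> 0\<^sub>v n \<longrightarrow> M *\<^sub>v v = e \<cdot>\<^sub>v v \<longrightarrow> nonneg_real e) \<longrightarrow>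
     (\<forall>u w (a::real) (b::real). u \<in> carrier_vec n \<longrightarrow> w \<in> carrier_vec n \<longrightarrow> (u \<noteq> 0\<^sub>v n \<or> w \<noteq> 0\<^sub>v n) \<longrightarrow>
        M *\<^sub>v u = of_real a \<cdot>\<^sub>v u - of_real b \<cdot>\<^sub>v w \<longrightarrow> M *\<^sub>v w = of_real b \<cdot>\<^sub>v u + of_real a \<cdot>\<^sub>v w \<longrightarrow>
        b = 0 \<and> a \<ge> 0) \<longrightarrow>
     nonneg_real (mat_trace M) \<and> (mat_trace M = 0 \<longrightarrow> M ^\<^sub>m n = 0\<^sub>m n n))"

lemma nonneg_spectrum_trace_property_complex: "nonneg_spectrum_trace_property TYPE(complex)"
  unfolding nonneg_spectrum_trace_property_def
proof (intro allI impI)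
  fix n and M :: "complex mat"
  assume M: "M \<in> carrier_mat n n"
    and "\<forall>v e. v \<in> carrier_vec n \<longrightarrow> v \<noteq> 0\<^sub>v n \<longrightarrow> M *\<^sub>v v = e \<cdot>\<^sub>v v \<longrightarrow> nonneg_real e"
  thus "nonneg_real (mat_trace M) \<and> (mat_trace M = 0 \<longrightarrow> M ^\<^sub>m n = 0\<^sub>m n n)"
    using M by (intro nonneg_spectrum_trace_complex) (auto simp: eigenvalue_def eigenvector_def)
qed

lemma nonneg_spectrum_trace_property_real: "nonneg_spectrum_trace_property TYPE(real)"
  unfolding nonneg_spectrum_trace_property_def
  by (intro allI impI nonneg_spectrum_trace_real) auto

lemma mat_trace_add:
  "A \<in> carrier_mat n n \<Longrightarrow> B \<in> carrier_mat n n \<Longrightarrow> mat_trace (A + B) = mat_trace A + mat_trace B"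
  unfolding mat_trace_def by (simp add: sum.distrib)

lemma mat_trace_smult: "(A::'a::comm_ring_1 mat) \<in> carrier_mat n n \<Longrightarrow> mat_trace (c \<cdot>\<^sub>m A) = c * mat_trace A"
  unfolding mat_trace_def by (simp add: sum_distrib_left)

lemma mat_trace_zero: "mat_trace (0\<^sub>m n n) = 0"
  unfolding mat_trace_def by simp

section \<open>The core of a real left ideal\<close>

locale real_ideal = star_alg sc st for sc :: "'k::rclike \<Rightarrow> 'a::ring_1 \<Rightarrow> 'a" and st +
  fixes I :: "'a set"
  assumes real_left_ideal: "real_left_ideal st I" and fin_codim: "fin_codim sc I"
begin

lemma left_ideal_I: "left_ideal I"
  using real_left_ideal unfolding real_left_ideal_def by blast

lemma subspace_I: "v.subspace I"
  using left_ideal_I by (rule left_ideal_subspace)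

lemma zero_in_I: "0 \<in> I"
  using left_ideal_I unfolding left_ideal_def by blast

lemma mult_in_I: "x \<in> I \<Longrightarrow> a * x \<in> I"
  using left_ideal_I unfolding left_ideal_def by blast

lemma add_in_I: "x \<in> I \<Longrightarrow> y \<in> I \<Longrightarrow> x + y \<in> I"
  using left_ideal_I unfolding left_ideal_def by blast

lemma real_ideal_sum: "(\<Sum>a\<leftarrow>as. st a * a) \<in> I \<Longrightarrow> set as \<subseteq> I"
  using real_left_ideal zero_in_I unfolding real_left_ideal_def by force

lemma real_ideal_square: "st a * a \<in> I \<Longrightarrow> a \<in> I"
  using real_ideal_sum[of "[a]"] by simp

abbreviation ideal_basis :: "'a list" where
  "ideal_basis \<equiv> quotient_basis I"

sublocale I_quot: left_ideal_basis sc st I ideal_basis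
  by (rule left_ideal_basis_quotient_basis[OF left_ideal_I fin_codim])

text \<open>The largest two-sided ideal contained in \<open>I\<close>.\<close>

definition core :: "'a set" where "core = {a. \<forall>b. a * b \<in> I}"

lemma core_iff_basis: "a \<in> core \<longleftrightarrow> (\<forall>k<I_quot.m. a * ideal_basis ! k \<in> I)"
proof
  assume "a \<in> core" thus "\<forall>k<I_quot.m. a * ideal_basis ! k \<in> I" unfolding core_def by blast
next
  assume h: "\<forall>k<I_quot.m. a * ideal_basis ! k \<in> I"
  show "a \<in> core" unfolding core_def
  proof (intro CollectI allI)
    fix b
    have "a * lin_comb (I_quot.coord b) ideal_basis = (\<Sum>j<I_quot.m. sc (I_quot.coord b $ j) (a * ideal_basis ! j))" by (rule I_quot.mult_lin_comb)
    also have "\<dots> \<in> I" using h by (intro v.subspace_sum[OF subspace_I] v.subspace_scale[OF subspace_I]) auto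
    finally have 1: "a * lin_comb (I_quot.coord b) ideal_basis \<in> I" .
    have 2: "a * (b - lin_comb (I_quot.coord b) ideal_basis) \<in> I" using I_quot.coord_spec(2) by (rule mult_in_I)
    have "a * b = a * (b - lin_comb (I_quot.coord b) ideal_basis) + a * lin_comb (I_quot.coord b) ideal_basis" by (simp add: algebra_simps)
    thus "a * b \<in> I" using 1 2 add_in_I by simp
  qed
qed

lemma core_subset: assumes "a \<in> core" shows "a \<in> I"
proof -
  have "a * 1 \<in> I" using assms unfolding core_def by blast
  thus ?thesis by simp
qed

lemma core_mult_left: "a \<in> core \<Longrightarrow> c * a \<in> core" unfolding core_def by (simp add: mult.assoc mult_in_I)
lemma core_mult_right: "a \<in> core \<Longrightarrow> a * c \<in> core" unfolding core_def by (simp add: mult.assoc)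
lemma core_add: "a \<in> core \<Longrightarrow> b \<in> core \<Longrightarrow> a + b \<in> core" unfolding core_def by (simp add: distrib_right add_in_I)
lemma core_0: "0 \<in> core" unfolding core_def using zero_in_I by simp

lemma left_ideal_core: "left_ideal core" unfolding left_ideal_def using core_0 core_add core_mult_left by blast
lemma subspace_core: "v.subspace core" using left_ideal_core by (rule left_ideal_subspace)
lemma core_sc: "a \<in> core \<Longrightarrow> sc c a \<in> core" using subspace_core v.subspace_scale by blast
lemma core_diff: "a \<in> core \<Longrightarrow> b \<in> core \<Longrightarrow> a - b \<in> core" using subspace_core v.subspace_diff by blast

lemma core_st: assumes a: "a \<in> core" shows "st a \<in> core"
  unfolding core_def
proof (intro CollectI allI)
  fix b
  have "a * (st a * b) \<in> I" using a unfolding core_def by blast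
  hence "st b * (a * (st a * b)) \<in> I" by (rule mult_in_I)
  moreover have "st (st a * b) * (st a * b) = st b * (a * (st a * b))"
    by (simp add: st_mult mult.assoc)
  ultimately have "st (st a * b) * (st a * b) \<in> I" by simp
  thus "st a * b \<in> I" by (rule real_ideal_square)
qed

lemma real_ideal_sum_core: assumes h: "(\<Sum>a\<leftarrow>as. st a * a) \<in> core" shows "set as \<subseteq> core"
proof
  fix a assume a: "a \<in> set as"
  show "a \<in> core" unfolding core_def
  proof (intro CollectI allI)
    fix b
    have "(\<Sum>a\<leftarrow>as. st a * a) * b \<in> I" using h unfolding core_def by blast
    hence "st b * ((\<Sum>a\<leftarrow>as. st a * a) * b) \<in> I" by (rule mult_in_I)
    moreover have "st b * ((\<Sum>a\<leftarrow>as. st a * a) * b) = (\<Sum>a\<leftarrow>as. st (a * b) * (a * b))"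
      by (induct as) (simp_all add: distrib_left distrib_right st_mult mult.assoc)
    ultimately have "(\<Sum>x\<leftarrow>map (\<lambda>a. a * b) as. st x * x) \<in> I" by (simp add: o_def)
    hence "set (map (\<lambda>a. a * b) as) \<subseteq> I" by (rule real_ideal_sum)
    thus "a * b \<in> I" using a by auto
  qed
qed

lemma real_ideal_square_core: "st a * a \<in> core \<Longrightarrow> a \<in> core" using real_ideal_sum_core[of "[a]"] by simp

definition core_forms :: "('a \<Rightarrow> 'k) set" where
  "core_forms = (\<lambda>(k, i) a. I_quot.coord (a * ideal_basis ! k) $ i) ` ({..<I_quot.m} \<times> {..<I_quot.m})"

lemma core_forms_linear: "\<forall>f\<in>core_forms. linear_form f"
  unfolding core_forms_def using I_quot.linear_form_coord_mult by auto

lemma core_forms_eq: assumes "\<forall>f\<in>core_forms. f x = f y" shows "x - y \<in> core"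
  unfolding core_iff_basis
proof (intro allI impI)
  fix k assume k: "k < I_quot.m"
  have "I_quot.coord (x * ideal_basis ! k) = I_quot.coord (y * ideal_basis ! k)"
    using assms k unfolding core_forms_def by (intro eq_vecI) force+
  thus "(x - y) * ideal_basis ! k \<in> I" using I_quot.coord_eq_iff by (simp add: left_diff_distrib)
qed

lemma fin_codim_core: "fin_codim sc core"
  using fin_codim_of_forms[OF _ core_forms_linear core_forms_eq] unfolding core_forms_def by blast

lemma ideal_mod_core_finite: "\<exists>B. finite B \<and> B \<subseteq> I \<and> (\<forall>x\<in>I. \<exists>y\<in>v.span B. x - y \<in> core)"
  using finite_span_mod_of_forms[OF subspace_I _ core_forms_linear core_forms_eq]
  unfolding core_forms_def by blast

abbreviation core_basis :: "'a list" where
  "core_basis \<equiv> quotient_basis core"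

sublocale core_quot: left_ideal_basis sc st core core_basis
  by (rule left_ideal_basis_quotient_basis[OF left_ideal_core fin_codim_core])

text \<open>If \<open>r < 0\<close>, then \<open>y\<^sup>* (x\<^sup>* x - r) y = (x y)\<^sup>* (x y) + (s y)\<^sup>* (s y)\<close> with \<open>s\<^sup>2 = -r\<close>, and realness
  of the core forces \<open>y \<in> core\<close>.\<close>

lemma square_eigenvalue_mod_core_nonneg:
  assumes d: "st x * x * y - sc (of_real r) y \<in> core" and y: "y \<notin> core"
  shows "r \<ge> 0"
proof (rule ccontr)
  assume "\<not> r \<ge> 0"
  hence r: "r < 0" by simp
  define s where "s = sqrt (- r)"
  have s: "s > 0" "s * s = - r" using r unfolding s_def by (auto simp: real_sqrt_mult_self)
  define z where "z = sc (of_real s) y"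
  have "st y * (st x * x * y - sc (of_real r) y) \<in> core" using d by (rule core_mult_left)
  moreover have "st y * (st x * x * y - sc (of_real r) y) = st (x * y) * (x * y) + st z * z"
  proof -
    have "st z * z = sc (conjugate (of_real s) * of_real s) (st y * y)" unfolding z_def by (rule st_sc_mult_sc)
    also have "conjugate (of_real s) * of_real s = (of_real (- r) :: 'k)"
      using s by (simp add: conjugate_of_real flip: of_real_mult)
    finally have "st z * z = sc (of_real (- r)) (st y * y)" .
    moreover have "st y * (st x * x * y - sc (of_real r) y) = st (x * y) * (x * y) - sc (of_real r) (st y * y)"
      by (simp add: st_mult right_diff_distrib sc_mult_right mult.assoc)
    ultimately show ?thesis by (simp add: v.scale_minus_left)
  qed
  ultimately have "st (x * y) * (x * y) + st z * z \<in> core" by simp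
  moreover have "(\<Sum>a\<leftarrow>[x * y, z]. st a * a) = st (x * y) * (x * y) + st z * z" by simp
  ultimately have "set [x * y, z] \<subseteq> core" using real_ideal_sum_core by metis
  hence "z \<in> core" by simp
  hence "sc (of_real (1 / s)) z \<in> core" by (rule core_sc)
  moreover have "sc (of_real (1 / s)) z = y" unfolding z_def using s
    by (simp add: v.scale_scale flip: of_real_mult)
  ultimately show False using y by simp
qed

lemma hermitian_eigenvalue_mod_core_real:
  assumes sth: "st h = h" and d: "h * y - sc e y \<in> core" and y: "y \<notin> core"
  shows "conjugate e = e"
proof (rule ccontr)
  assume ne: "conjugate e \<noteq> e"
  define P where "P = st y * h * y"
  define Y where "Y = st y * y"
  have d1: "P - sc e Y \<in> core"
  proof -
    have "st y * (h * y - sc e y) \<in> core" using d by (rule core_mult_left)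
    moreover have "st y * (h * y - sc e y) = P - sc e Y"
      unfolding P_def Y_def by (simp add: right_diff_distrib sc_mult_right mult.assoc)
    ultimately show ?thesis by simp
  qed
  have d2: "P - sc (conjugate e) Y \<in> core"
  proof -
    have "st (P - sc e Y) \<in> core" using d1 by (rule core_st)
    moreover have "st (P - sc e Y) = P - sc (conjugate e) Y"
      unfolding P_def Y_def by (simp add: st_diff st_sc st_mult sth mult.assoc)
    ultimately show ?thesis by simp
  qed
  have "(P - sc e Y) - (P - sc (conjugate e) Y) = sc (conjugate e - e) Y"
    by (simp add: v.scale_left_diff_distrib)
  hence "sc (conjugate e - e) Y \<in> core" using core_diff[OF d1 d2] by simp
  hence "sc (inverse (conjugate e - e)) (sc (conjugate e - e) Y) \<in> core" by (rule core_sc)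
  hence "Y \<in> core" using ne by (simp add: v.scale_scale)
  hence "y \<in> core" unfolding Y_def by (rule real_ideal_square_core)
  thus False using y by simp
qed

text \<open>Multiplying the two relations by \<open>y\<^sub>1\<^sup>*\<close> and \<open>y\<^sub>2\<^sup>*\<close> and using \<open>h\<^sup>* = h\<close> leaves
  \<open>b (y\<^sub>1\<^sup>* y\<^sub>1 + y\<^sub>2\<^sup>* y\<^sub>2) \<in> core\<close>.\<close>

lemma rotation_mod_core_degenerate:
  assumes sth: "st h = h" and nz: "y1 \<notin> core \<or> y2 \<notin> core"
    and d1: "h * y1 - (sc (of_real a) y1 - sc (of_real b) y2) \<in> core"
    and d2: "h * y2 - (sc (of_real b) y1 + sc (of_real a) y2) \<in> core"
  shows "b = 0"
proof (rule ccontr)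
  assume "b \<noteq> 0"
  define A :: 'k where "A = of_real a"
  define B :: 'k where "B = of_real b"
  have T1: "st y1 * h * y2 - sc B (st y1 * y1) - sc A (st y1 * y2) \<in> core"
  proof -
    have "st y1 * (h * y2 - (sc B y1 + sc A y2)) \<in> core" using d2 unfolding A_def B_def by (rule core_mult_left)
    thus ?thesis by (simp add: right_diff_distrib distrib_left sc_mult_right mult.assoc diff_diff_eq)
  qed
  have T2: "st y1 * h * y2 - sc A (st y1 * y2) + sc B (st y2 * y2) \<in> core"
  proof -
    have "st y2 * (h * y1 - (sc A y1 - sc B y2)) \<in> core" using d1 unfolding A_def B_def by (rule core_mult_left)
    hence "st (st y2 * (h * y1 - (sc A y1 - sc B y2))) \<in> core" by (rule core_st)
    moreover have "st (st y2 * (h * y1 - (sc A y1 - sc B y2))) = st y1 * h * y2 - sc A (st y1 * y2) + sc B (st y2 * y2)"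
      unfolding A_def B_def
      by (simp add: st_add st_diff st_sc st_mult sth right_diff_distrib sc_mult_right sc_mult_left
          mult.assoc algebra_simps)
    ultimately show ?thesis by simp
  qed
  have "(st y1 * h * y2 - sc B (st y1 * y1) - sc A (st y1 * y2)) -
        (st y1 * h * y2 - sc A (st y1 * y2) + sc B (st y2 * y2)) = sc (- B) (st y1 * y1 + st y2 * y2)"
    by (simp add: algebra_simps v.scale_right_distrib)
  hence "sc (- B) (st y1 * y1 + st y2 * y2) \<in> core" using core_diff[OF T1 T2] by simp
  hence "sc (inverse (- B)) (sc (- B) (st y1 * y1 + st y2 * y2)) \<in> core" by (rule core_sc)
  hence "(\<Sum>a\<leftarrow>[y1, y2]. st a * a) \<in> core" using \<open>b \<noteq> 0\<close> unfolding B_def by (simp add: v.scale_scale add.commute)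
  hence "set [y1, y2] \<subseteq> core" by (rule real_ideal_sum_core)
  thus False using nz by simp
qed

lemma reg_square_eigenvalue_nonneg:
  assumes v: "v \<in> carrier_vec core_quot.m" "v \<noteq> 0\<^sub>v core_quot.m"
    and ev: "core_quot.reg (st x * x) *\<^sub>v v = e \<cdot>\<^sub>v v"
  shows "nonneg_real e"
proof -
  define y where "y = lin_comb v core_basis"
  have coy: "core_quot.coord y = v" unfolding y_def by (rule core_quot.coord_lin_comb[OF v(1)])
  have y: "y \<notin> core" using coy v(2) core_quot.coord_eq_0_iff by blast
  have "core_quot.coord (st x * x * y) = core_quot.coord (sc e y)"
    using core_quot.coord_mult[of "st x * x" y] coy ev core_quot.coord_sc[of e y] by simp
  hence d: "st x * x * y - sc e y \<in> core" using core_quot.coord_eq_iff by blast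
  have "conjugate e = e"
    by (rule hermitian_eigenvalue_mod_core_real[OF _ d y]) (simp add: st_mult)
  then obtain r where r: "e = of_real r" using conjugate_fixed_imp_real by blast
  have "r \<ge> 0" using square_eigenvalue_mod_core_nonneg d y r by blast
  thus "nonneg_real e" unfolding nonneg_real_def using r by blast
qed

lemma reg_square_invariant_plane:
  assumes uw: "u \<in> carrier_vec core_quot.m" "w \<in> carrier_vec core_quot.m" and nz: "u \<noteq> 0\<^sub>v core_quot.m \<or> w \<noteq> 0\<^sub>v core_quot.m"
    and Mu: "core_quot.reg (st x * x) *\<^sub>v u = of_real a \<cdot>\<^sub>v u - of_real b \<cdot>\<^sub>v w"
    and Mw: "core_quot.reg (st x * x) *\<^sub>v w = of_real b \<cdot>\<^sub>v u + of_real a \<cdot>\<^sub>v w"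
  shows "b = 0 \<and> a \<ge> 0"
proof -
  define y1 where "y1 = lin_comb u core_basis"
  define y2 where "y2 = lin_comb w core_basis"
  have co1: "core_quot.coord y1 = u" unfolding y1_def by (rule core_quot.coord_lin_comb[OF uw(1)])
  have co2: "core_quot.coord y2 = w" unfolding y2_def by (rule core_quot.coord_lin_comb[OF uw(2)])
  have "core_quot.coord (st x * x * y1) = core_quot.coord (sc (of_real a) y1 - sc (of_real b) y2)"
    using core_quot.coord_mult[of "st x * x" y1] co1 co2 Mu by (simp add: core_quot.coord_diff core_quot.coord_sc)
  hence d1: "st x * x * y1 - (sc (of_real a) y1 - sc (of_real b) y2) \<in> core"
    using core_quot.coord_eq_iff by blast
  have "core_quot.coord (st x * x * y2) = core_quot.coord (sc (of_real b) y1 + sc (of_real a) y2)"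
    using core_quot.coord_mult[of "st x * x" y2] co1 co2 Mw by (simp add: core_quot.coord_add core_quot.coord_sc)
  hence d2: "st x * x * y2 - (sc (of_real b) y1 + sc (of_real a) y2) \<in> core"
    using core_quot.coord_eq_iff by blast
  have nz': "y1 \<notin> core \<or> y2 \<notin> core" using nz co1 co2 core_quot.coord_eq_0_iff by auto
  have b: "b = 0"
    by (rule rotation_mod_core_degenerate[OF _ nz' d1 d2]) (simp add: st_mult)
  have "a \<ge> 0"
  proof (cases "y1 \<in> core")
    case False
    thus ?thesis using square_eigenvalue_mod_core_nonneg[of x y1 a] d1 b by simp
  next
    case True
    thus ?thesis using square_eigenvalue_mod_core_nonneg[of x y2 a] d2 b nz' by simp
  qed
  thus ?thesis using b by simp
qed

lemma hermitian_nilpotent_core: assumes sth: "st h = h" shows "h ^ k \<in> core \<Longrightarrow> h \<in> core"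
proof (induct k rule: less_induct)
  case (less k)
  show ?case
  proof (cases "k \<le> 1")
    case True
    show ?thesis
    proof (cases "k = 0")
      case True
      hence "1 \<in> core" using less(2) by simp
      hence "h * 1 \<in> core" by (rule core_mult_left)
      thus ?thesis by simp
    next
      case False hence "k = 1" using True by simp
      thus ?thesis using less(2) by simp
    qed
  next
    case False
    define j where "j = (k + 1) div 2"
    have j: "j < k" "k \<le> 2 * j" using False unfolding j_def by auto
    have "h ^ (2 * j - k) * h ^ k \<in> core" using less(2) by (rule core_mult_left)
    moreover have "h ^ (2 * j - k) * h ^ k = st (h ^ j) * h ^ j"
      using j by (simp add: st_pow sth flip: power_add) (simp add: mult_2)
    ultimately have "st (h ^ j) * h ^ j \<in> core" by simp
    hence "h ^ j \<in> core" by (rule real_ideal_square_core)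
    thus ?thesis by (rule less(1)[OF j(1)])
  qed
qed

end

section \<open>A faithful positive trace on the quotient by the core\<close>

locale real_ideal_trace = real_ideal sc st I for sc :: "'k::rclike \<Rightarrow> 'a::ring_1 \<Rightarrow> 'a" and st I +
  assumes nonneg_spectrum_trace: "nonneg_spectrum_trace_property TYPE('k)"
begin

definition trace_form :: "'a \<Rightarrow> 'k" where "trace_form a = mat_trace (core_quot.reg a)"

lemma trace_form_square:
  "nonneg_real (trace_form (st x * x)) \<and>
   (trace_form (st x * x) = 0 \<longrightarrow> core_quot.reg (st x * x) ^\<^sub>m core_quot.m = 0\<^sub>m core_quot.m core_quot.m)"
  using nonneg_spectrum_trace[unfolded nonneg_spectrum_trace_property_def, rule_format, OF core_quot.reg_carrier]
    reg_square_eigenvalue_nonneg reg_square_invariant_plane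
  unfolding trace_form_def by blast

lemma trace_form_square_nonneg: "nonneg_real (trace_form (st x * x))"
  using trace_form_square by blast

lemma trace_form_square_eq_0: assumes "trace_form (st x * x) = 0" shows "x \<in> core"
proof -
  have "core_quot.reg ((st x * x) ^ core_quot.m) = 0\<^sub>m core_quot.m core_quot.m"
    using trace_form_square assms by (simp add: core_quot.reg_pow)
  hence "(st x * x) ^ core_quot.m \<in> core" by (rule core_quot.reg_eq_0_imp_mem)
  hence "st x * x \<in> core" by (rule hermitian_nilpotent_core[rotated]) (simp add: st_mult)
  thus "x \<in> core" by (rule real_ideal_square_core)
qed

lemma trace_form_add: "trace_form (a + b) = trace_form a + trace_form b"
  unfolding trace_form_def by (simp add: core_quot.reg_add mat_trace_add[of _ core_quot.m])

lemma trace_form_sc: "trace_form (sc c a) = c * trace_form a"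
  unfolding trace_form_def by (simp add: core_quot.reg_sc mat_trace_smult[of _ core_quot.m])

lemma trace_form_core: assumes j: "j \<in> core" shows "trace_form j = 0"
proof -
  have "core_quot.reg j = 0\<^sub>m core_quot.m core_quot.m"
  proof (rule eq_matI)
    fix i k assume "i < dim_row (0\<^sub>m core_quot.m core_quot.m :: 'k mat)" "k < dim_col (0\<^sub>m core_quot.m core_quot.m :: 'k mat)"
    hence ik: "i < core_quot.m" "k < core_quot.m" by auto
    have "j * core_basis ! k \<in> core" using j by (rule core_mult_right)
    hence "core_quot.coord (j * core_basis ! k) = 0\<^sub>v core_quot.m" using core_quot.coord_eq_0_iff by blast
    thus "core_quot.reg j $$ (i, k) = 0\<^sub>m core_quot.m core_quot.m $$ (i, k)" using ik by (simp add: core_quot.reg_def)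
  qed auto
  thus ?thesis unfolding trace_form_def by (simp add: mat_trace_zero)
qed

definition trace_form_sym :: "'a \<Rightarrow> 'k" where "trace_form_sym a = (trace_form a + conjugate (trace_form (st a))) / 2"

lemma trace_form_sym_add: "trace_form_sym (a + b) = trace_form_sym a + trace_form_sym b"
  unfolding trace_form_sym_def by (simp add: trace_form_add st_add conjugate_dist_add add_divide_distrib)

lemma trace_form_sym_sc: "trace_form_sym (sc c a) = c * trace_form_sym a"
proof -
  have "conjugate (trace_form (st (sc c a))) = c * conjugate (trace_form (st a))"
    by (simp only: st_sc trace_form_sc conjugate_dist_mul conjugate_id)
  thus ?thesis unfolding trace_form_sym_def by (simp add: trace_form_sc distrib_left)
qed

lemma trace_form_sym_st: "trace_form_sym (st a) = conjugate (trace_form_sym a)"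
proof -
  have "conjugate (trace_form_sym a) = (conjugate (trace_form a) + trace_form (st a)) / 2"
    unfolding trace_form_sym_def by (simp only: conjugate_divide conjugate_dist_add conjugate_id conjugate_numeral)
  thus ?thesis unfolding trace_form_sym_def by (simp add: add.commute)
qed

lemma trace_form_sym_core: "j \<in> core \<Longrightarrow> trace_form_sym j = 0"
  unfolding trace_form_sym_def using trace_form_core core_st by simp

lemma trace_form_sym_square: "trace_form_sym (st x * x) = trace_form (st x * x)"
proof -
  obtain r where r: "trace_form (st x * x) = of_real r" using trace_form_square_nonneg[of x] unfolding nonneg_real_def by blast
  have "st (st x * x) = st x * x" by (simp add: st_mult)
  thus ?thesis unfolding trace_form_sym_def using r by (simp add: conjugate_of_real)
qed

end

section \<open>An inner product and an orthonormal complement of the ideal\<close>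

context real_ideal_trace begin

definition inner :: "'a \<Rightarrow> 'a \<Rightarrow> 'k" where "inner x y = trace_form_sym (st y * x)"

lemma inner_add_left: "inner (x + x') y = inner x y + inner x' y"
  unfolding inner_def by (simp add: distrib_left trace_form_sym_add)
lemma inner_sc_left: "inner (sc c x) y = c * inner x y"
  unfolding inner_def by (simp add: sc_mult_right trace_form_sym_sc)
lemma inner_conj: "inner y x = conjugate (inner x y)"
  unfolding inner_def by (metis st_mult st_st trace_form_sym_st)
lemma inner_add_right: "inner x (y + y') = inner x y + inner x y'"
  by (metis inner_conj inner_add_left conjugate_dist_add)
lemma inner_sc_right: "inner x (sc c y) = conjugate c * inner x y"
  by (metis inner_conj inner_sc_left conjugate_dist_mul)
lemma inner_diff_left: "inner (x - x') y = inner x y - inner x' y"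
  using inner_add_left[of "x - x'" x' y] by simp
lemma inner_zero_left [simp]: "inner 0 y = 0" using inner_sc_left[of 0 0 y] by simp
lemma inner_zero_right [simp]: "inner x 0 = 0" using inner_sc_right[of x 0 0] by simp
lemma inner_sum_left: "inner (\<Sum>i\<in>A. f i) y = (\<Sum>i\<in>A. inner (f i) y)"
  by (induct A rule: infinite_finite_induct) (auto simp: inner_add_left)
lemma inner_self: "inner x x = trace_form (st x * x)" unfolding inner_def by (rule trace_form_sym_square)
lemma inner_self_nonneg: "nonneg_real (inner x x)" unfolding inner_self by (rule trace_form_square_nonneg)
lemma inner_self_eq_0_imp_core: "inner x x = 0 \<Longrightarrow> x \<in> core" unfolding inner_self by (rule trace_form_square_eq_0)
lemma inner_core_right: "j \<in> core \<Longrightarrow> inner x j = 0"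
  unfolding inner_def by (intro trace_form_sym_core core_mult_right core_st)
lemma inner_mult_left_adjoint: "inner (a * x) y = inner x (st a * y)"
  unfolding inner_def by (simp add: st_mult mult.assoc)

lemma inner_orth_subspace: "v.subspace {w. inner u w = 0}"
  unfolding v.subspace_def by (auto simp: inner_add_right inner_sc_right)

lemma inner_orth_span: "(\<And>w. w \<in> S \<Longrightarrow> inner u w = 0) \<Longrightarrow> w \<in> v.span S \<Longrightarrow> inner u w = 0"
  using v.span_minimal[OF _ inner_orth_subspace, of S u] by blast

definition norm_sq :: "'a \<Rightarrow> real" where "norm_sq x = norm (inner x x)"

lemma inner_self_eq_norm_sq: "inner x x = of_real (norm_sq x)" "norm_sq x \<ge> 0"
proof -
  obtain r where r: "r \<ge> 0" "inner x x = of_real r" using inner_self_nonneg[of x] unfolding nonneg_real_def by blast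
  thus "inner x x = of_real (norm_sq x)" unfolding norm_sq_def by simp
  show "norm_sq x \<ge> 0" unfolding norm_sq_def by simp
qed

definition orth_proj :: "'a list \<Rightarrow> 'a \<Rightarrow> 'a" where
  "orth_proj us x = x - (\<Sum>k<length us. sc (inner x (us ! k)) (us ! k))"

definition orthonormal :: "'a list \<Rightarrow> bool" where
  "orthonormal us \<longleftrightarrow> (\<forall>i<length us. \<forall>j<length us. inner (us ! i) (us ! j) = (if i = j then 1 else 0))"

definition gram_schmidt_step :: "'a list \<Rightarrow> 'a \<Rightarrow> 'a list" where
  "gram_schmidt_step us x = (if inner (orth_proj us x) (orth_proj us x) = 0 then us
      else us @ [sc (of_real (1 / sqrt (norm_sq (orth_proj us x)))) (orth_proj us x)])"

definition gram_schmidt :: "'a list \<Rightarrow> 'a list \<Rightarrow> 'a list" where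
  "gram_schmidt us xs = foldl gram_schmidt_step us xs"

lemma inner_sum_orthonormal: assumes on: "orthonormal us" and j: "j < length us"
  shows "inner (\<Sum>k<length us. sc (c k) (us ! k)) (us ! j) = c j"
proof -
  have "inner (\<Sum>k<length us. sc (c k) (us ! k)) (us ! j) = (\<Sum>k<length us. c k * (if k = j then 1 else 0))"
    using on j unfolding orthonormal_def by (simp add: inner_sum_left inner_sc_left)
  also have "\<dots> = c j" using j by (simp add: if_distrib sum.delta cong: if_cong)
  finally show ?thesis .
qed

lemma inner_orth_proj: assumes on: "orthonormal us" and j: "j < length us"
  shows "inner (orth_proj us x) (us ! j) = 0"
  unfolding orth_proj_def inner_diff_left inner_sum_orthonormal[OF on j] by simp

lemma orth_proj_span: "x - orth_proj us x \<in> v.span (set us)"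
proof -
  have "(\<Sum>k<length us. sc (inner x (us ! k)) (us ! k)) \<in> v.span (set us)"
    by (rule v.span_sum, rule v.span_scale, rule v.span_base) simp
  thus ?thesis unfolding orth_proj_def by simp
qed

lemma orth_proj_in_span: "orth_proj us x \<in> v.span (insert x (set us))"
proof -
  have "x \<in> v.span (insert x (set us))" by (rule v.span_base) simp
  moreover have "x - orth_proj us x \<in> v.span (insert x (set us))"
    using orth_proj_span v.span_mono[of "set us" "insert x (set us)"] by blast
  ultimately have "x - (x - orth_proj us x) \<in> v.span (insert x (set us))" by (rule v.span_diff)
  thus ?thesis by simp
qed

lemma gram_schmidt_step_prefix: "\<exists>ts. gram_schmidt_step us x = us @ ts" unfolding gram_schmidt_step_def by auto

lemma orthonormal_snoc:
  assumes on: "orthonormal us" and ee: "inner e e = 1" and eu: "\<And>j. j < length us \<Longrightarrow> inner e (us ! j) = 0"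
  shows "orthonormal (us @ [e])"
proof -
  have ue: "inner (us ! j) e = 0" if "j < length us" for j
    using eu[OF that] inner_conj[of "us ! j" e] by simp
  show ?thesis unfolding orthonormal_def
  proof (intro allI impI)
    fix i j assume i: "i < length (us @ [e])" and j: "j < length (us @ [e])"
    show "inner ((us @ [e]) ! i) ((us @ [e]) ! j) = (if i = j then 1 else 0)"
      using i j on ee eu ue unfolding orthonormal_def
      by (cases "i < length us"; cases "j < length us") (auto simp: nth_append)
  qed
qed

lemma inner_self_normalize:
  assumes "inner y y = of_real r" and "r > 0"
  shows "inner (sc (of_real (1 / sqrt r)) y) (sc (of_real (1 / sqrt r)) y) = 1"
proof -
  define t where "t = 1 / sqrt r"
  have "inner (sc (of_real t) y) (sc (of_real t) y) = of_real t * (conjugate (of_real t) * inner y y)"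
    by (simp only: inner_sc_left inner_sc_right mult.left_commute)
  also have "\<dots> = of_real (t * t * r)" by (simp add: assms(1))
  also have "t * t * r = 1" unfolding t_def using assms(2) by (simp add: field_simps)
  finally show ?thesis unfolding t_def by simp
qed

lemma gram_schmidt_step_orthonormal:
  assumes on: "orthonormal us" shows "orthonormal (gram_schmidt_step us x)"
proof (cases "inner (orth_proj us x) (orth_proj us x) = 0")
  case True thus ?thesis using on unfolding gram_schmidt_step_def by simp
next
  case False
  define y where "y = orth_proj us x"
  define r where "r = norm_sq y"
  have r: "inner y y = of_real r" "r > 0"
    using inner_self_eq_norm_sq[of y] False unfolding r_def y_def by auto
  have step: "gram_schmidt_step us x = us @ [sc (of_real (1 / sqrt r)) y]"
    using False unfolding gram_schmidt_step_def r_def y_def by simp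
  show ?thesis unfolding step
  proof (rule orthonormal_snoc[OF on inner_self_normalize[OF r]])
    show "inner (sc (of_real (1 / sqrt r)) y) (us ! j) = 0" if "j < length us" for j
      unfolding y_def using inner_orth_proj[OF on that] by (simp add: inner_sc_left)
  qed
qed

lemma gram_schmidt_step_spans_mod_core: "\<exists>z\<in>v.span (set (gram_schmidt_step us x)). x - z \<in> core"
proof (cases "inner (orth_proj us x) (orth_proj us x) = 0")
  case True
  hence "orth_proj us x \<in> core" by (rule inner_self_eq_0_imp_core)
  moreover have "x - orth_proj us x \<in> v.span (set (gram_schmidt_step us x))" using True orth_proj_span unfolding gram_schmidt_step_def by simp
  ultimately show ?thesis by (intro bexI[of _ "x - orth_proj us x"]) auto
next
  case False
  define y where "y = orth_proj us x"
  define r where "r = norm_sq y"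
  have r: "inner y y = of_real r" "r > 0" using inner_self_eq_norm_sq[of y] False unfolding r_def y_def by auto
  define e where "e = sc (of_real (1 / sqrt r)) y"
  have g: "gram_schmidt_step us x = us @ [e]" using False unfolding gram_schmidt_step_def e_def r_def y_def by simp
  have "y = sc (of_real (sqrt r)) e" unfolding e_def using r(2)
    by (simp add: v.scale_scale flip: of_real_mult)
  moreover have "sc (of_real (sqrt r)) e \<in> v.span (set (us @ [e]))"
    by (rule v.span_scale, rule v.span_base) simp
  ultimately have "y \<in> v.span (set (gram_schmidt_step us x))" unfolding g by simp
  moreover have "x - y \<in> v.span (set (gram_schmidt_step us x))" unfolding g y_def
    using orth_proj_span v.span_mono[of "set us" "set (us @ [e])"] by auto
  ultimately have "(x - y) + y \<in> v.span (set (gram_schmidt_step us x))" by (rule v.span_add[rotated])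
  thus ?thesis using core_0 by (intro bexI[of _ x]) auto
qed

lemma gram_schmidt_step_subset_span: "set (gram_schmidt_step us x) \<subseteq> v.span (insert x (set us))"
proof -
  have "set us \<subseteq> v.span (insert x (set us))" using v.span_superset by blast
  moreover have "sc c (orth_proj us x) \<in> v.span (insert x (set us))" for c
    by (rule v.span_scale[OF orth_proj_in_span])
  ultimately show ?thesis unfolding gram_schmidt_step_def by auto
qed

lemma gram_schmidt_spec: "orthonormal us \<Longrightarrow> orthonormal (gram_schmidt us xs) \<and> (\<exists>ts. gram_schmidt us xs = us @ ts)
   \<and> (\<forall>x\<in>set xs. \<exists>z\<in>v.span (set (gram_schmidt us xs)). x - z \<in> core)
   \<and> set (gram_schmidt us xs) \<subseteq> v.span (set us \<union> set xs)"
proof (induct xs arbitrary: us)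
  case Nil thus ?case unfolding gram_schmidt_def using v.span_superset by auto
next
  case (Cons x xs)
  let ?us' = "gram_schmidt_step us x"
  have on': "orthonormal ?us'" using Cons(2) by (rule gram_schmidt_step_orthonormal)
  note IH = Cons(1)[OF on']
  have gram_schmidt_eq: "gram_schmidt us (x # xs) = gram_schmidt ?us' xs" unfolding gram_schmidt_def by simp
  obtain ts where ts: "?us' = us @ ts" using gram_schmidt_step_prefix by blast
  obtain ts' where ts': "gram_schmidt ?us' xs = ?us' @ ts'" using IH by blast
  have mono: "v.span (set ?us') \<subseteq> v.span (set (gram_schmidt ?us' xs))" using ts' by (intro v.span_mono) auto
  have A: "\<exists>ts. gram_schmidt us (x # xs) = us @ ts" using ts ts' gram_schmidt_eq by auto
  have B: "\<forall>y\<in>set (x # xs). \<exists>z\<in>v.span (set (gram_schmidt us (x # xs))). y - z \<in> core"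
  proof
    fix y assume "y \<in> set (x # xs)"
    then consider "y = x" | "y \<in> set xs" by auto
    thus "\<exists>z\<in>v.span (set (gram_schmidt us (x # xs))). y - z \<in> core"
    proof cases
      case 1
      obtain z where "z \<in> v.span (set ?us')" "x - z \<in> core" using gram_schmidt_step_spans_mod_core by blast
      thus ?thesis using 1 mono gram_schmidt_eq by auto
    next
      case 2 thus ?thesis using IH gram_schmidt_eq by auto
    qed
  qed
  have C: "set (gram_schmidt us (x # xs)) \<subseteq> v.span (set us \<union> set (x # xs))"
  proof -
    have "set (gram_schmidt ?us' xs) \<subseteq> v.span (set ?us' \<union> set xs)" using IH by blast
    also have "\<dots> \<subseteq> v.span (set us \<union> set (x # xs))"
    proof (rule v.span_minimal[OF _ v.subspace_span])
      have "set ?us' \<subseteq> v.span (insert x (set us))" by (rule gram_schmidt_step_subset_span)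
      also have "\<dots> \<subseteq> v.span (set us \<union> set (x # xs))" by (rule v.span_mono) auto
      moreover have "set xs \<subseteq> v.span (set us \<union> set (x # xs))"
        using v.span_superset[of "set us \<union> set (x # xs)"] by auto
      ultimately show "set ?us' \<union> set xs \<subseteq> v.span (set us \<union> set (x # xs))" by blast
    qed
    finally show ?thesis using gram_schmidt_eq by simp
  qed
  show ?case using IH A B C gram_schmidt_eq by simp
qed

lemma subspace_span_mod_core: "v.subspace {x. \<exists>z\<in>v.span Z. x - z \<in> core}"
  unfolding v.subspace_def
proof (intro conjI allI impI ballI)
  show "0 \<in> {x. \<exists>z\<in>v.span Z. x - z \<in> core}" using v.span_zero core_0 by force
next
  fix x y assume "x \<in> {x. \<exists>z\<in>v.span Z. x - z \<in> core}" "y \<in> {x. \<exists>z\<in>v.span Z. x - z \<in> core}"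
  then obtain w1 w2 where w: "w1 \<in> v.span Z" "x - w1 \<in> core" "w2 \<in> v.span Z" "y - w2 \<in> core" by auto
  have "(x + y) - (w1 + w2) = (x - w1) + (y - w2)" by (simp add: algebra_simps)
  hence "(x + y) - (w1 + w2) \<in> core" using core_add[OF w(2,4)] by (simp only:)
  thus "x + y \<in> {x. \<exists>z\<in>v.span Z. x - z \<in> core}" using v.span_add w by blast
next
  fix c x assume "x \<in> {x. \<exists>z\<in>v.span Z. x - z \<in> core}"
  then obtain w where w: "w \<in> v.span Z" "x - w \<in> core" by auto
  have "sc c x - sc c w = sc c (x - w)" by (simp add: v.scale_right_diff_distrib)
  hence "sc c x - sc c w \<in> core" using core_sc w by simp
  thus "sc c x \<in> {x. \<exists>z\<in>v.span Z. x - z \<in> core}" using v.span_scale w by blast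
qed

lemma span_mod_core_span:
  assumes "\<forall>x\<in>X. \<exists>z\<in>v.span Z. x - z \<in> core" and "y \<in> v.span X"
  shows "\<exists>z\<in>v.span Z. y - z \<in> core"
  using v.span_minimal[OF _ subspace_span_mod_core, of X Z] assms by blast

lemma orthonormal_append:
  assumes on: "orthonormal (xs @ ys)"
  shows "orthonormal ys" and "\<And>u w. u \<in> set ys \<Longrightarrow> w \<in> set xs \<Longrightarrow> inner u w = 0"
proof -
  let ?l = "length xs"
  have on': "inner ((xs @ ys) ! i) ((xs @ ys) ! j) = (if i = j then 1 else 0)"
    if "i < ?l + length ys" "j < ?l + length ys" for i j
    using on that unfolding orthonormal_def by simp
  show "orthonormal ys" unfolding orthonormal_def
    using on'[of "?l + i" "?l + j" for i j] by (simp add: nth_append)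
  show "inner u w = 0" if u: "u \<in> set ys" and w: "w \<in> set xs" for u w
  proof -
    obtain i where "i < length ys" "u = ys ! i" using u by (auto simp: in_set_conv_nth)
    moreover obtain j where "j < ?l" "w = xs ! j" using w by (auto simp: in_set_conv_nth)
    ultimately show ?thesis using on'[of "?l + i" j] by (simp add: nth_append)
  qed
qed

lemma exists_orthonormal_complement:
  "\<exists>us. orthonormal us \<and> (\<forall>x. \<exists>z\<in>v.span (set us). x - z \<in> I) \<and> (\<forall>u\<in>set us. \<forall>i\<in>I. inner u i = 0)"
proof -
  obtain B1 where B1: "finite B1" "B1 \<subseteq> I" and I_B1: "\<forall>x\<in>I. \<exists>y\<in>v.span B1. x - y \<in> core"
    using ideal_mod_core_finite by blast
  obtain B0 where B0: "finite B0" "\<forall>x. \<exists>y\<in>v.span B0. x - y \<in> I"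
    using fin_codim unfolding fin_codim_def by blast
  obtain s where s: "set s = B1" using finite_list[OF B1(1)] by blast
  obtain b where b: "set b = B0" using finite_list[OF B0(1)] by blast
  define ws where "ws = gram_schmidt [] s"
  have ws: "orthonormal ws" "\<forall>x\<in>set s. \<exists>z\<in>v.span (set ws). x - z \<in> core" "set ws \<subseteq> v.span (set s)"
    using gram_schmidt_spec[of "[]" s] unfolding ws_def orthonormal_def by auto
  from gram_schmidt_spec[OF ws(1), of b] obtain us where
    "orthonormal (gram_schmidt ws b)" "gram_schmidt ws b = ws @ us"
    "\<forall>x\<in>set b. \<exists>z\<in>v.span (set (gram_schmidt ws b)). x - z \<in> core" by blast
  hence us: "orthonormal (ws @ us)" "\<forall>x\<in>set b. \<exists>z\<in>v.span (set (ws @ us)). x - z \<in> core"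
    by simp_all
  have "v.span (set s) \<subseteq> I" using s B1(2) subspace_I by (intro v.span_minimal) auto
  hence ws_I: "v.span (set ws) \<subseteq> I" using ws(3) subspace_I by (intro v.span_minimal) auto
  have "inner u i = 0" if u: "u \<in> set us" and i: "i \<in> I" for u i
  proof -
    obtain y where y: "y \<in> v.span B1" "i - y \<in> core" using I_B1 i by blast
    obtain z where z: "z \<in> v.span (set ws)" "y - z \<in> core"
      using span_mod_core_span[OF ws(2)] y(1) s by blast
    have "inner u z = 0" using inner_orth_span orthonormal_append(2)[OF us(1) u] z(1) by blast
    moreover have "inner u ((i - y) + (y - z)) = 0" using inner_core_right core_add y(2) z(2) by blast
    ultimately show "inner u i = 0" using inner_add_right[of u "(i - y) + (y - z)" z] by simp
  qed
  moreover have "\<exists>z\<in>v.span (set us). x - z \<in> I" for x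
  proof -
    obtain y where y: "y \<in> v.span B0" "x - y \<in> I" using B0(2) by blast
    obtain w where w: "w \<in> v.span (set ws \<union> set us)" "y - w \<in> core"
      using span_mod_core_span[OF us(2)] y(1) b by auto
    then obtain w1 w2 where ww: "w = w1 + w2" "w1 \<in> v.span (set ws)" "w2 \<in> v.span (set us)"
      unfolding v.span_Un by blast
    have "(x - y) + (y - w) + w1 \<in> I" using y(2) w(2) ww(2) ws_I core_subset add_in_I by blast
    moreover have "x - w2 = (x - y) + (y - w) + w1" using ww(1) by (simp add: algebra_simps)
    ultimately have "x - w2 \<in> I" by (simp only:)
    thus ?thesis using ww(3) by blast
  qed
  ultimately show ?thesis using orthonormal_append(1)[OF us(1)] by blast
qed

end

section \<open>The representation attached to a real left ideal\<close>

context real_ideal_trace begin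

definition onb :: "'a list" where
  "onb = (SOME us. orthonormal us \<and> (\<forall>x. \<exists>z\<in>v.span (set us). x - z \<in> I) \<and> (\<forall>u\<in>set us. \<forall>i\<in>I. inner u i = 0))"

lemma onb_spec: "orthonormal onb" "\<forall>x. \<exists>z\<in>v.span (set onb). x - z \<in> I" "\<forall>u\<in>set onb. \<forall>i\<in>I. inner u i = 0"
proof -
  have "orthonormal onb \<and> (\<forall>x. \<exists>z\<in>v.span (set onb). x - z \<in> I) \<and> (\<forall>u\<in>set onb. \<forall>i\<in>I. inner u i = 0)"
    unfolding onb_def by (rule someI_ex) (rule exists_orthonormal_complement)
  thus "orthonormal onb" "\<forall>x. \<exists>z\<in>v.span (set onb). x - z \<in> I" "\<forall>u\<in>set onb. \<forall>i\<in>I. inner u i = 0" by auto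
qed

abbreviation "nb \<equiv> length onb"

lemma inner_onb_I: "i \<in> I \<Longrightarrow> k < nb \<Longrightarrow> inner (onb ! k) i = 0"
  using onb_spec(3) by auto

lemma inner_I_onb: "i \<in> I \<Longrightarrow> k < nb \<Longrightarrow> inner i (onb ! k) = 0"
  using inner_onb_I inner_conj by (metis conjugate_zero)

lemma onb_expansion: "x - (\<Sum>k<nb. sc (inner x (onb ! k)) (onb ! k)) \<in> I"
proof -
  define r where "r = x - (\<Sum>k<nb. sc (inner x (onb ! k)) (onb ! k))"
  have rp: "r = orth_proj onb x" unfolding r_def orth_proj_def by simp
  have ru: "inner r (onb ! j) = 0" if "j < nb" for j unfolding rp by (rule inner_orth_proj[OF onb_spec(1) that])
  obtain z where z: "z \<in> v.span (set onb)" "r - z \<in> I" using onb_spec(2) by blast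
  have zu: "inner z w = 0" if wU: "w \<in> set onb" for w
  proof -
    obtain j where j: "j < nb" "w = onb ! j" using wU by (auto simp: in_set_conv_nth)
    have "inner z w = inner r w - inner (r - z) w" by (simp add: inner_diff_left)
    also have "\<dots> = 0" using ru[OF j(1)] inner_I_onb[OF z(2) j(1)] j(2) by simp
    finally show ?thesis .
  qed
  have "inner z z = 0" by (rule inner_orth_span[of "set onb" z z]) (use zu z(1) in auto)
  hence "z \<in> core" by (rule inner_self_eq_0_imp_core)
  hence "z \<in> I" by (rule core_subset)
  hence "(r - z) + z \<in> I" using z(2) add_in_I by blast
  thus ?thesis unfolding r_def by simp
qed

lemma inner_mult_onb: assumes i: "i < nb"
  shows "inner (a * x) (onb ! i) = (\<Sum>k<nb. inner x (onb ! k) * inner (a * onb ! k) (onb ! i))"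
proof -
  define S where "S = (\<Sum>k<nb. sc (inner x (onb ! k)) (onb ! k))"
  have "a * (x - S) \<in> I" unfolding S_def by (rule mult_in_I[OF onb_expansion])
  hence 0: "inner (a * (x - S)) (onb ! i) = 0" using inner_I_onb i by blast
  have "a * x = a * (x - S) + a * S" by (simp add: algebra_simps)
  hence "inner (a * x) (onb ! i) = inner (a * S) (onb ! i)" using 0 by (simp add: inner_add_left)
  also have "\<dots> = (\<Sum>k<nb. inner x (onb ! k) * inner (a * onb ! k) (onb ! i))"
    unfolding S_def by (simp add: sum_distrib_left sc_mult_right inner_sum_left inner_sc_left)
  finally show ?thesis .
qed

definition ideal_rep :: "'a \<Rightarrow> 'k mat" where
  "ideal_rep a = mat nb nb (\<lambda>(i,j). inner (a * onb ! j) (onb ! i))"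

lemma ideal_rep_carrier: "ideal_rep a \<in> carrier_mat nb nb" unfolding ideal_rep_def by simp
lemma dim_ideal_rep[simp]: "dim_row (ideal_rep a) = nb" "dim_col (ideal_rep a) = nb" unfolding ideal_rep_def by simp_all

lemma ideal_rep_one: "ideal_rep 1 = 1\<^sub>m nb"
  using onb_spec(1) unfolding orthonormal_def by (intro eq_matI) (auto simp: ideal_rep_def)

lemma ideal_rep_add: "ideal_rep (a + b) = ideal_rep a + ideal_rep b"
  by (intro eq_matI) (auto simp: ideal_rep_def distrib_right inner_add_left)

lemma ideal_rep_sc: "ideal_rep (sc c a) = c \<cdot>\<^sub>m ideal_rep a"
  by (intro eq_matI) (auto simp: ideal_rep_def sc_mult_left inner_sc_left)

lemma ideal_rep_mult: "ideal_rep (a * b) = ideal_rep a * ideal_rep b"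
proof (rule eq_matI)
  fix i j assume "i < dim_row (ideal_rep a * ideal_rep b)" "j < dim_col (ideal_rep a * ideal_rep b)"
  hence ij: "i < nb" "j < nb" by auto
  have "(ideal_rep a * ideal_rep b) $$ (i,j) = (\<Sum>k<nb. inner (a * onb ! k) (onb ! i) * inner (b * onb ! j) (onb ! k))"
    using ij by (simp add: ideal_rep_def scalar_prod_def atLeast0LessThan)
  also have "\<dots> = inner (a * (b * onb ! j)) (onb ! i)" using inner_mult_onb[OF ij(1), of a "b * onb ! j"]
    by (simp add: mult.commute)
  also have "\<dots> = ideal_rep (a * b) $$ (i,j)" using ij by (simp add: ideal_rep_def mult.assoc)
  finally show "ideal_rep (a * b) $$ (i, j) = (ideal_rep a * ideal_rep b) $$ (i, j)" by simp
qed auto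

lemma ideal_rep_st: "ideal_rep (st a) = adjoint_mat (ideal_rep a)"
proof (rule eq_matI)
  fix i j assume "i < dim_row (adjoint_mat (ideal_rep a))" "j < dim_col (adjoint_mat (ideal_rep a))"
  hence ij: "i < nb" "j < nb" by (auto simp: adjoint_mat_def)
  have "ideal_rep (st a) $$ (i,j) = inner (onb ! j) (a * onb ! i)" using ij by (simp add: ideal_rep_def inner_mult_left_adjoint)
  also have "\<dots> = conjugate (inner (a * onb ! i) (onb ! j))" by (rule inner_conj)
  also have "\<dots> = adjoint_mat (ideal_rep a) $$ (i,j)" using ij by (simp add: adjoint_mat_def ideal_rep_def)
  finally show "ideal_rep (st a) $$ (i, j) = adjoint_mat (ideal_rep a) $$ (i, j)" .
qed (auto simp: adjoint_mat_def)

lemma ideal_rep_star_rep: "star_rep sc st nb ideal_rep"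
  unfolding star_rep_def using ideal_rep_carrier ideal_rep_one ideal_rep_add ideal_rep_mult ideal_rep_sc ideal_rep_st by blast

lemma ideal_rep_soft: "I_soft ideal_rep = hat I"
  unfolding set_eq_iff I_soft_def mem_Collect_eq
proof (intro allI iffI)
  fix p assume "det (ideal_rep p) = 0"
  then obtain c where c: "c \<in> carrier_vec nb" "c \<noteq> 0\<^sub>v nb" "ideal_rep p *\<^sub>v c = 0\<^sub>v nb"
    using det_0_iff_vec_prod_zero[OF ideal_rep_carrier] by blast
  define x where "x = (\<Sum>k<nb. sc (c $ k) (onb ! k))"
  have xc: "inner x (onb ! j) = c $ j" if "j < nb" for j
    unfolding x_def by (rule inner_sum_orthonormal[OF onb_spec(1) that])
  have xI: "x \<notin> I"
  proof
    assume "x \<in> I"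
    hence "c $ j = 0" if "j < nb" for j using xc[OF that] inner_I_onb[OF _ that] by simp
    hence "c = 0\<^sub>v nb" using c(1) by (intro eq_vecI) auto
    thus False using c(2) by simp
  qed
  have px: "inner (p * x) (onb ! i) = 0" if i: "i < nb" for i
  proof -
    have "inner (p * x) (onb ! i) = (\<Sum>k<nb. c $ k * inner (p * onb ! k) (onb ! i))"
      using inner_mult_onb[OF i, of p x] xc by simp
    also have "\<dots> = (ideal_rep p *\<^sub>v c) $ i" using i c(1)
      by (simp add: ideal_rep_def scalar_prod_def atLeast0LessThan mult.commute)
    also have "\<dots> = 0" using c(3) i by simp
    finally show ?thesis .
  qed
  have "p * x - (\<Sum>k<nb. sc (inner (p * x) (onb ! k)) (onb ! k)) \<in> I" by (rule onb_expansion)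
  hence "p * x \<in> I" using px by simp
  thus "p \<in> hat I" using xI unfolding hat_def by blast
next
  fix p assume "p \<in> hat I"
  then obtain q where q: "q \<notin> I" "p * q \<in> I" unfolding hat_def by blast
  define c where "c = vec nb (\<lambda>k. inner q (onb ! k))"
  have c0: "c \<noteq> 0\<^sub>v nb"
  proof
    assume "c = 0\<^sub>v nb"
    have "inner q (onb ! k) = 0" if kU: "k < nb" for k
    proof -
      have "c $ k = 0" using \<open>c = 0\<^sub>v nb\<close> kU by simp
      thus ?thesis unfolding c_def using kU by simp
    qed
    hence "q - (\<Sum>k<nb. sc (inner q (onb ! k)) (onb ! k)) = q" by simp
    thus False using onb_expansion[of q] q(1) by simp
  qed
  have "ideal_rep p *\<^sub>v c = 0\<^sub>v nb"
  proof (rule eq_vecI)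
    fix i assume "i < dim_vec (0\<^sub>v nb :: 'k vec)"
    hence i: "i < nb" by simp
    have "(ideal_rep p *\<^sub>v c) $ i = (\<Sum>k<nb. inner q (onb ! k) * inner (p * onb ! k) (onb ! i))"
      using i by (simp add: ideal_rep_def c_def scalar_prod_def atLeast0LessThan mult.commute)
    also have "\<dots> = inner (p * q) (onb ! i)" by (rule inner_mult_onb[OF i, of p q, symmetric])
    also have "\<dots> = 0" using inner_I_onb[OF q(2) i] .
    finally show "(ideal_rep p *\<^sub>v c) $ i = 0\<^sub>v nb $ i" using i by simp
  qed simp
  moreover have "c \<in> carrier_vec nb" unfolding c_def by simp
  ultimately show "det (ideal_rep p) = 0" using c0 det_0_iff_vec_prod_zero[OF ideal_rep_carrier] by blast
qed

end

section \<open>Finite-dimensional \<open>*\<close>-representations\<close>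

locale star_representation = star_alg sc st for sc :: "'k::rclike \<Rightarrow> 'a::ring_1 \<Rightarrow> 'a" and st +
  fixes n :: nat and \<pi> :: "'a \<Rightarrow> 'k mat"
  assumes star_rep: "star_rep sc st n \<pi>"
begin

lemma rep_carrier: "\<pi> a \<in> carrier_mat n n" using star_rep unfolding star_rep_def by blast
lemma rep_one: "\<pi> 1 = 1\<^sub>m n" using star_rep unfolding star_rep_def by blast
lemma rep_add: "\<pi> (a + b) = \<pi> a + \<pi> b" using star_rep unfolding star_rep_def by blast
lemma rep_mult: "\<pi> (a * b) = \<pi> a * \<pi> b" using star_rep unfolding star_rep_def by blast
lemma rep_sc: "\<pi> (sc c a) = c \<cdot>\<^sub>m \<pi> a" using star_rep unfolding star_rep_def by blast
lemma rep_st: "\<pi> (st a) = adjoint_mat (\<pi> a)" using star_rep unfolding star_rep_def by blast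
lemma dim_rep [simp]: "dim_row (\<pi> a) = n" "dim_col (\<pi> a) = n" using rep_carrier[of a] by auto

definition entry :: "nat \<Rightarrow> nat \<Rightarrow> 'a \<Rightarrow> 'k" where "entry i j a = \<pi> a $$ (i,j)"

lemma linear_form_entry: "i < n \<Longrightarrow> j < n \<Longrightarrow> linear_form (entry i j)"
  unfolding linear_form_def entry_def by (simp add: rep_add rep_sc)

definition kernel :: "'a set" where "kernel = {a. \<pi> a = 0\<^sub>m n n}"

lemma kernel_iff_entry: "a \<in> kernel \<longleftrightarrow> (\<forall>i<n. \<forall>j<n. entry i j a = 0)"
  unfolding kernel_def entry_def by (auto intro!: eq_matI)

lemma diff_kernel_iff_entry: "x - y \<in> kernel \<longleftrightarrow> (\<forall>i<n. \<forall>j<n. entry i j x = entry i j y)"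
  unfolding kernel_iff_entry using linear_form_entry by (simp add: linear_form_diff)

lemma rep_eq_of_diff_kernel: "x - y \<in> kernel \<Longrightarrow> \<pi> x = \<pi> y"
  unfolding diff_kernel_iff_entry entry_def by (intro eq_matI) auto

lemma entry_0: "i < n \<Longrightarrow> j < n \<Longrightarrow> entry i j 0 = 0"
  using linear_form_sc[OF linear_form_entry, of i j 0 0] by simp

lemma kernel_left_ideal: "left_ideal kernel"
  unfolding left_ideal_def
proof (intro conjI ballI allI)
  show "0 \<in> kernel" unfolding kernel_iff_entry using entry_0 by blast
  fix x y assume "x \<in> kernel" "y \<in> kernel"
  thus "x + y \<in> kernel" unfolding kernel_iff_entry using linear_form_entry by (simp add: linear_form_add)
next
  fix a x assume "x \<in> kernel"
  thus "a * x \<in> kernel" unfolding kernel_def by (simp add: rep_mult right_mult_zero_mat[OF rep_carrier])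
qed

lemma kernel_st: "a \<in> kernel \<Longrightarrow> st a \<in> kernel"
  unfolding kernel_iff_entry entry_def by (simp add: rep_st adjoint_mat_def)

definition col_norm_sq :: "nat \<Rightarrow> 'a \<Rightarrow> real" where
  "col_norm_sq j a = (\<Sum>i<n. (norm (\<pi> a $$ (i,j)))\<^sup>2)"

lemma entry_diag_sum_squares:
  assumes "j < n"
  shows "entry j j (\<Sum>a\<leftarrow>as. st a * a) = of_real (\<Sum>a\<leftarrow>as. col_norm_sq j a)"
proof (induct as)
  case Nil
  thus ?case using entry_0[OF assms assms] by simp
next
  case (Cons a as)
  have "entry j j (st a * a) = (\<Sum>i<n. conjugate (\<pi> a $$ (i,j)) * \<pi> a $$ (i,j))"
    unfolding entry_def rep_mult rep_st using assms
    by (simp add: adjoint_mat_def scalar_prod_def atLeast0LessThan)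
  also have "\<dots> = of_real (col_norm_sq j a)"
    unfolding col_norm_sq_def by (simp add: conjugate_mult_self)
  finally show ?case using Cons linear_form_add[OF linear_form_entry[OF assms assms]] by simp
qed

lemma kernel_real: "real_left_ideal st kernel"
  unfolding real_left_ideal_def
proof (intro conjI allI impI kernel_left_ideal subsetI)
  fix as :: "'a list" and a
  assume "(\<Sum>a\<leftarrow>as. st a * a) \<in> {x + st y |x y. x \<in> kernel \<and> y \<in> kernel}" and a: "a \<in> set as"
  then obtain x y where "(\<Sum>a\<leftarrow>as. st a * a) = x + st y" "x \<in> kernel" "y \<in> kernel" by blast
  hence "(\<Sum>a\<leftarrow>as. st a * a) \<in> kernel"
    using kernel_left_ideal kernel_st[of y] unfolding left_ideal_def by simp
  have "col_norm_sq j a = 0" if j: "j < n" for j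
  proof -
    have "entry j j (\<Sum>a\<leftarrow>as. st a * a) = 0"
      using \<open>(\<Sum>a\<leftarrow>as. st a * a) \<in> kernel\<close> j unfolding kernel_iff_entry by blast
    hence "sum_list (map (col_norm_sq j) as) = 0"
      unfolding entry_diag_sum_squares[OF j] by simp
    moreover have "\<forall>x\<in>set (map (col_norm_sq j) as). 0 \<le> x"
      unfolding col_norm_sq_def by (auto intro: sum_nonneg)
    ultimately have "\<forall>x\<in>set (map (col_norm_sq j) as). x = 0"
      using sum_list_nonneg_eq_0_iff by blast
    thus ?thesis using a by simp
  qed
  hence "\<pi> a $$ (i,j) = 0" if "i < n" "j < n" for i j
    using that unfolding col_norm_sq_def by (simp add: sum_nonneg_eq_0_iff)
  thus "a \<in> kernel" unfolding kernel_iff_entry entry_def by blast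
qed

lemma fin_codim_kernel: "fin_codim sc kernel"
proof (rule fin_codim_of_forms)
  let ?F = "(\<lambda>(i, j). entry i j) ` ({..<n} \<times> {..<n})"
  show "finite ?F" by simp
  show "\<forall>f\<in>?F. linear_form f" using linear_form_entry by auto
  show "x - y \<in> kernel" if "\<forall>f\<in>?F. f x = f y" for x y
    using that unfolding diff_kernel_iff_entry by force
qed

sublocale kernel_quot: left_ideal_basis sc st kernel "quotient_basis kernel"
  by (rule left_ideal_basis_quotient_basis[OF kernel_left_ideal fin_codim_kernel])

lemma hat_kernel: "hat kernel = I_soft \<pi>"
  unfolding set_eq_iff
proof (intro allI iffI)
  fix p assume "p \<in> hat kernel"
  then obtain q where q: "q \<notin> kernel" "p * q \<in> kernel" unfolding hat_def by blast
  obtain i j where ij: "i < n" "j < n" "\<pi> q $$ (i,j) \<noteq> 0"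
    using q(1) unfolding kernel_iff_entry entry_def by blast
  have w1: "col (\<pi> q) j \<in> carrier_vec n" unfolding carrier_vec_def by simp
  have w2: "col (\<pi> q) j \<noteq> 0\<^sub>v n"
  proof
    assume "col (\<pi> q) j = 0\<^sub>v n"
    hence "col (\<pi> q) j $ i = 0" using ij by simp
    thus False using ij by simp
  qed
  have "\<pi> p *\<^sub>v col (\<pi> q) j = col (\<pi> (p * q)) j"
    using ij by (simp add: rep_mult col_mult2[OF rep_carrier rep_carrier ij(2)])
  also have "\<dots> = 0\<^sub>v n" using q(2) ij unfolding kernel_def by (intro eq_vecI) auto
  finally show "p \<in> I_soft \<pi>"
    using w1 w2 det_0_iff_vec_prod_zero[OF rep_carrier] unfolding I_soft_def by blast
next
  fix p assume p: "p \<in> I_soft \<pi>"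
  show "p \<in> hat kernel"
  proof (rule ccontr)
    assume "p \<notin> hat kernel"
    hence "det (kernel_quot.reg p) \<noteq> 0" unfolding kernel_quot.hat_eq_singular_reg by simp
    then obtain c where "p * c - 1 \<in> kernel" using kernel_quot.right_inverse_mod_of_det_reg by blast
    hence "\<pi> (p * c) = \<pi> 1" by (rule rep_eq_of_diff_kernel)
    hence "\<pi> p * \<pi> c = 1\<^sub>m n" by (simp add: rep_mult rep_one)
    hence "det (\<pi> p) * det (\<pi> c) = 1" using det_mult[OF rep_carrier rep_carrier, of p c] det_one by simp
    thus False using p unfolding I_soft_def by simp
  qed
qed

end

definition direct_sum_rep :: "('a \<Rightarrow> 'k::rclike mat) \<Rightarrow> nat \<Rightarrow> ('a \<Rightarrow> 'k mat) \<Rightarrow> nat \<Rightarrow> 'a \<Rightarrow> 'k mat" where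
  "direct_sum_rep \<pi>1 n1 \<pi>2 n2 a = four_block_mat (\<pi>1 a) (0\<^sub>m n1 n2) (0\<^sub>m n2 n1) (\<pi>2 a)"

context star_alg begin

lemma star_representation_intro: "star_rep sc st n \<pi> \<Longrightarrow> star_representation sc st n \<pi>"
  by unfold_locales

lemma star_rep_direct_sum:
  assumes "star_rep sc st n1 \<pi>1" and "star_rep sc st n2 \<pi>2"
  shows "star_rep sc st (n1 + n2) (direct_sum_rep \<pi>1 n1 \<pi>2 n2)"
proof -
  interpret r1: star_representation sc st n1 \<pi>1 by (rule star_representation_intro[OF assms(1)])
  interpret r2: star_representation sc st n2 \<pi>2 by (rule star_representation_intro[OF assms(2)])
  note c1 = r1.rep_carrier and c2 = r2.rep_carrier
  let ?p = "direct_sum_rep \<pi>1 n1 \<pi>2 n2"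
  have car: "?p a \<in> carrier_mat (n1 + n2) (n1 + n2)" for a
    unfolding direct_sum_rep_def using c1 c2 by (intro four_block_carrier_mat) auto
  have "?p 1 = 1\<^sub>m (n1 + n2)" unfolding direct_sum_rep_def r1.rep_one r2.rep_one by simp
  moreover have "?p (a + b) = ?p a + ?p b" for a b
    unfolding direct_sum_rep_def r1.rep_add r2.rep_add
    by (subst add_four_block_mat[OF c1 zero_carrier_mat zero_carrier_mat c2 c1 zero_carrier_mat zero_carrier_mat c2])
      simp
  moreover have "?p (a * b) = ?p a * ?p b" for a b
    unfolding direct_sum_rep_def r1.rep_mult r2.rep_mult
    by (subst mult_four_block_mat[OF c1 zero_carrier_mat zero_carrier_mat c2 c1 zero_carrier_mat zero_carrier_mat c2])
      (simp add: right_mult_zero_mat[OF c1] left_mult_zero_mat[OF c2] left_mult_zero_mat[OF c1]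
        right_mult_zero_mat[OF c2] right_add_zero_mat[OF mult_carrier_mat[OF c1 c1]]
        left_add_zero_mat[OF mult_carrier_mat[OF c2 c2]])
  moreover have "?p (sc c a) = c \<cdot>\<^sub>m ?p a" for c a
    unfolding direct_sum_rep_def r1.rep_sc r2.rep_sc
    by (subst smult_four_block_mat[OF c1 zero_carrier_mat zero_carrier_mat c2]) simp
  moreover have "?p (st a) = adjoint_mat (?p a)" for a
  proof (rule eq_matI)
    fix i j assume "i < dim_row (adjoint_mat (?p a))" "j < dim_col (adjoint_mat (?p a))"
    hence "i < n1 + n2" "j < n1 + n2" using car[of a] by (simp_all add: adjoint_mat_def)
    thus "?p (st a) $$ (i, j) = adjoint_mat (?p a) $$ (i, j)"
      unfolding direct_sum_rep_def r1.rep_st r2.rep_st using c1[of a] c2[of a]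
      by (auto simp: adjoint_mat_def)
  qed (use car[of a] car[of "st a"] in \<open>simp_all add: adjoint_mat_def\<close>)
  ultimately show ?thesis unfolding star_rep_def using car by blast
qed

lemma I_soft_direct_sum_rep:
  assumes "star_rep sc st n1 \<pi>1" and "star_rep sc st n2 \<pi>2"
  shows "I_soft (direct_sum_rep \<pi>1 n1 \<pi>2 n2) = I_soft \<pi>1 \<union> I_soft \<pi>2"
proof -
  have "\<pi>1 a \<in> carrier_mat n1 n1" "\<pi>2 a \<in> carrier_mat n2 n2" for a
    using assms unfolding star_rep_def by blast+
  hence "det (direct_sum_rep \<pi>1 n1 \<pi>2 n2 a) = det (\<pi>1 a) * det (\<pi>2 a)" for a
    unfolding direct_sum_rep_def by (intro det_four_block_mat_lower_left_zero) auto
  thus ?thesis unfolding I_soft_def by auto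
qed

lemma star_rep_zero_dim: "star_rep sc st 0 (\<lambda>a. 1\<^sub>m 0)"
  unfolding star_rep_def by (auto intro!: eq_matI simp: adjoint_mat_def)

lemma exists_star_rep_union_hat:
  assumes "nonneg_spectrum_trace_property TYPE('k)"
    and "\<forall>I\<in>set Is. real_left_ideal st I \<and> fin_codim sc I"
  shows "\<exists>n (\<pi> :: 'a \<Rightarrow> 'k mat). star_rep sc st n \<pi> \<and> I_soft \<pi> = (\<Union>I\<in>set Is. hat I)"
  using assms(2)
proof (induct Is)
  case Nil
  show ?case using star_rep_zero_dim by (intro exI[of _ 0] exI[of _ "\<lambda>a. 1\<^sub>m 0"]) (simp add: I_soft_def)
next
  case (Cons I Is)
  then obtain n2 and \<pi>2 :: "'a \<Rightarrow> 'k mat"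
    where \<pi>2: "star_rep sc st n2 \<pi>2" "I_soft \<pi>2 = (\<Union>I\<in>set Is. hat I)" by auto
  interpret I: real_ideal_trace sc st I
    using star_alg_axioms Cons(2) assms(1)
    by (simp add: real_ideal_trace_def real_ideal_trace_axioms_def real_ideal_def real_ideal_axioms_def)
  have \<pi>1: "star_rep sc st I.nb I.ideal_rep" "I_soft I.ideal_rep = hat I"
    by (rule I.ideal_rep_star_rep, rule I.ideal_rep_soft)
  show ?case
    using star_rep_direct_sum[OF \<pi>1(1) \<pi>2(1)] I_soft_direct_sum_rep[OF \<pi>1(1) \<pi>2(1)] \<pi>1(2) \<pi>2(2)
    by (intro exI conjI) auto
qed

lemma soft_ideal_iff_union_hat:
  assumes "nonneg_spectrum_trace_property TYPE('k)"
  shows "(\<exists>n (\<pi> :: 'a \<Rightarrow> 'k mat). star_rep sc st n \<pi> \<and> S = I_soft \<pi>) \<longleftrightarrow>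
         (\<exists>Is. (\<forall>I\<in>set Is. real_left_ideal st I \<and> fin_codim sc I) \<and> S = (\<Union>I\<in>set Is. hat I))"
proof
  assume "\<exists>n (\<pi> :: 'a \<Rightarrow> 'k mat). star_rep sc st n \<pi> \<and> S = I_soft \<pi>"
  then obtain n and \<pi> :: "'a \<Rightarrow> 'k mat" where \<pi>: "star_rep sc st n \<pi>" and S: "S = I_soft \<pi>" by blast
  interpret \<pi>: star_representation sc st n \<pi>
    using \<pi> star_alg_axioms by (simp add: star_representation_def star_representation_axioms_def)
  show "\<exists>Is. (\<forall>I\<in>set Is. real_left_ideal st I \<and> fin_codim sc I) \<and> S = (\<Union>I\<in>set Is. hat I)"
    using \<pi>.kernel_real \<pi>.fin_codim_kernel \<pi>.hat_kernel S by (intro exI[of _ "[\<pi>.kernel]"]) simp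
qed (use exists_star_rep_union_hat[OF assms] in metis)

end

theorem proposition6p1:
  shows "(\<forall>(sc :: real \<Rightarrow> 'a::ring_1 \<Rightarrow> 'a) st (S :: 'a set). star_algebra sc st \<longrightarrow>
            ((\<exists>n (\<pi> :: 'a \<Rightarrow> real mat). star_rep sc st n \<pi> \<and> S = I_soft \<pi>) \<longleftrightarrow>
             (\<exists>Is :: 'a set list. (\<forall>I\<in>set Is. real_left_ideal st I \<and> fin_codim sc I) \<and>
                S = (\<Union>I\<in>set Is. hat I))))
       \<and> (\<forall>(sc :: complex \<Rightarrow> 'b::ring_1 \<Rightarrow> 'b) st (S :: 'b set). star_algebra sc st \<longrightarrow>
            ((\<exists>n (\<pi> :: 'b \<Rightarrow> complex mat). star_rep sc st n \<pi> \<and> S = I_soft \<pi>) \<longleftrightarrow>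
             (\<exists>Is :: 'b set list. (\<forall>I\<in>set Is. real_left_ideal st I \<and> fin_codim sc I) \<and>
                S = (\<Union>I\<in>set Is. hat I))))"
  by (intro conjI allI impI; rule star_alg.soft_ideal_iff_union_hat)
    (simp_all add: star_alg_def nonneg_spectrum_trace_property_real nonneg_spectrum_trace_property_complex)

end
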